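(* Let $(G,\Phi)$ be a self-replicating contracting self-similar group of degree $d$ with $G$ finitely generated, and let $G_0=G_0^{un}/H$ be a standard contracting cover with epimorphism $\pi:G_0\to G$ induced by $\pi^{un}$. Then $\varphi^{un}$ induces a homomorphism $\varphi_1:G_0\to G_0\wr S_d$ such that the self-similar group $(G_0,\varphi_1)$ is contracting and self-replicating with nucleus (the image of) $S$, and $\widehat\pi\circ\varphi_1=\Phi\circ\pi$, where $\widehat\pi:G_0\wr S_d\to G\wr S_d$, $((k_x)_{x\in X},\tau)\mapsto((\pi(k_x))_{x\in X},\tau)$.
   Context: Self-similar groups: fix $d\ge 2$, $X=\{0,\dots,d-1\}$, $S_d$ the symmetric group of $X$ acting from the right. $G\wr S_d=G^X\rtimes S_d$ has elements $((g_x)_{x\in X},\tau)$ and product $((g_x),\tau)((g'_x),\tau')=((g_xg'_{x\tau}),\tau\tau')$. A self-similar group of degree $d$ is $(G,\Phi)$ with $\Phi:G\to G\wr S_d$ a homomorphism, $\Phi(g)=((g_x)_x,\tau_g)$. On the set $X^*$ of finite words, define a right action and sections by: empty word fixed, $(xw)g=(x\tau_g)(w\,g_x)$, $g_\emptyset=g$, $g_{xw}=(g_x)_w$. Contracting: there is finite $\mathcal M\subset G$ such that every $g$ has $g_v\in\mathcal M$ for all $v$ of length $\ge k(g)$; the nucleus $\mathcal N$ is the smallest such set. Self-replicating: for all $g\in G$, $x\in X$ there is $h$ with $xh=x$, $h_x=g$. Universal contracting cover: $\mathcal N=\{n_1,\dots,n_\ell\}$, $\Phi(n_i)=((n_{i(x)})_x,\tau_i)$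 (sections of nucleus elements are in $\mathcal N$); $S=\{s_1,\dots,s_\ell\}$; $R$ = words $s_i$ (if $n_i=1$), $s_is_j$ (if $n_in_j=1$), $s_is_js_k$ (if $n_in_jn_k=1$); $G_0^{un}=\langle S\mid R\rangle$, $\pi^{un}(s_i)=n_i$ (an epimorphism); $\varphi^{un}:G_0^{un}\to G_0^{un}\wr S_d$ the homomorphism extending $s_i\mapsto((s_{i(x)})_x,\tau_i)$. Standard contracting cover: for $x\in X$, $n_i\in\mathcal N$ choose $g(x,n_i)\in G$ with $x\,g(x,n_i)=x$, $g(x,n_i)_x=n_i$; choose $h(x,n_i)\in G_0^{un}$ with $\pi^{un}(h(x,n_i))=g(x,n_i)$; put $w(x,n_i)=h(x,n_i)_xs_i^{-1}$ (section w.r.t. $\varphi^{un}$); $E=\{w(x,n_i)_v:x\in X,n_i\in\mathcal N,v\in X^*\}$ (finite); $H$ = normal closure of $E$ in $G_0^{un}$; $G_0=G_0^{un}/H$. *)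

theory Defs
  imports "HOL-Algebra.Algebra" "HOL-Combinatorics.Permutations"
begin

text \<open>A permutation tau of X is a function permuting {0..<d}; the right action
  is x tau = tau x, so the product tau tau' (first tau, then tau') is the function tau' o tau.\<close>

definition wreath :: "('a,'b) monoid_scheme \<Rightarrow> nat \<Rightarrow> ((nat \<Rightarrow> 'a) \<times> (nat \<Rightarrow> nat)) monoid" where
  "wreath G d = \<lparr> carrier = (Pi\<^sub>E {0..<d} (\<lambda>_. carrier G)) \<times> {\<tau>. \<tau> permutes {0..<d}},
     monoid.mult = (\<lambda>a b. ((\<lambda>x\<in>{0..<d}. fst a x \<otimes>\<^bsub>G\<^esub> fst b (snd a x)), snd b \<circ> snd a)),
     one = ((\<lambda>x\<in>{0..<d}. \<one>\<^bsub>G\<^esub>), id) \<rparr>"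

definition self_similar :: "('a,'b) monoid_scheme \<Rightarrow> nat \<Rightarrow> ('a \<Rightarrow> (nat \<Rightarrow> 'a) \<times> (nat \<Rightarrow> nat)) \<Rightarrow> bool" where
  "self_similar G d \<Phi> \<longleftrightarrow> group G \<and> \<Phi> \<in> hom G (wreath G d)"

fun act :: "('a \<Rightarrow> (nat \<Rightarrow> 'a) \<times> (nat \<Rightarrow> nat)) \<Rightarrow> 'a \<Rightarrow> nat list \<Rightarrow> nat list" where
  "act \<Phi> g [] = []"
| "act \<Phi> g (x # w) = snd (\<Phi> g) x # act \<Phi> (fst (\<Phi> g) x) w"

fun sect :: "('a \<Rightarrow> (nat \<Rightarrow> 'a) \<times> (nat \<Rightarrow> nat)) \<Rightarrow> 'a \<Rightarrow> nat list \<Rightarrow> 'a" where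
  "sect \<Phi> g [] = g"
| "sect \<Phi> g (x # w) = sect \<Phi> (fst (\<Phi> g) x) w"

definition words :: "nat \<Rightarrow> nat list set" where
  "words d = {v. set v \<subseteq> {0..<d}}"

definition contracting_set :: "('a,'b) monoid_scheme \<Rightarrow> nat \<Rightarrow> ('a \<Rightarrow> (nat \<Rightarrow> 'a) \<times> (nat \<Rightarrow> nat)) \<Rightarrow> 'a set \<Rightarrow> bool" where
  "contracting_set G d \<Phi> M \<longleftrightarrow> finite M \<and> M \<subseteq> carrier G \<and>
     (\<forall>g\<in>carrier G. \<exists>k. \<forall>v\<in>words d. length v \<ge> k \<longrightarrow> sect \<Phi> g v \<in> M)"

definition contracting :: "('a,'b) monoid_scheme \<Rightarrow> nat \<Rightarrow> ('a \<Rightarrow> (nat \<Rightarrow> 'a) \<times> (nat \<Rightarrow> nat)) \<Rightarrow> bool" where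
  "contracting G d \<Phi> \<longleftrightarrow> (\<exists>M. contracting_set G d \<Phi> M)"

definition is_nucleus :: "('a,'b) monoid_scheme \<Rightarrow> nat \<Rightarrow> ('a \<Rightarrow> (nat \<Rightarrow> 'a) \<times> (nat \<Rightarrow> nat)) \<Rightarrow> 'a set \<Rightarrow> bool" where
  "is_nucleus G d \<Phi> N \<longleftrightarrow> contracting_set G d \<Phi> N \<and> (\<forall>M. contracting_set G d \<Phi> M \<longrightarrow> N \<subseteq> M)"

definition self_replicating :: "('a,'b) monoid_scheme \<Rightarrow> nat \<Rightarrow> ('a \<Rightarrow> (nat \<Rightarrow> 'a) \<times> (nat \<Rightarrow> nat)) \<Rightarrow> bool" where
  "self_replicating G d \<Phi> \<longleftrightarrow>
     (\<forall>g\<in>carrier G. \<forall>x<d. \<exists>h\<in>carrier G. snd (\<Phi> h) x = x \<and> fst (\<Phi> h) x = g)"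

definition finitely_generated :: "('a,'b) monoid_scheme \<Rightarrow> bool" where
  "finitely_generated G \<longleftrightarrow> (\<exists>A. finite A \<and> A \<subseteq> carrier G \<and> generate G A = carrier G)"

definition normal_closure :: "('a,'b) monoid_scheme \<Rightarrow> 'a set \<Rightarrow> 'a set" where
  "normal_closure G E = generate G (\<Union>g\<in>carrier G. (\<lambda>e. g \<otimes>\<^bsub>G\<^esub> e \<otimes>\<^bsub>G\<^esub> inv\<^bsub>G\<^esub> g) ` E)"

text \<open>Words in the generators s_0..s_{l-1}: a letter (i, True) is s_i, (i, False) is s_i^{-1}.\<close>
type_synonym gword = "(nat \<times> bool) list"

definition valid_word :: "nat \<Rightarrow> gword \<Rightarrow> bool" where
  "valid_word l w \<longleftrightarrow> set w \<subseteq> {0..<l} \<times> UNIV"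

inductive pres_eq :: "nat \<Rightarrow> gword set \<Rightarrow> gword \<Rightarrow> gword \<Rightarrow> bool" for l R where
  refl: "valid_word l w \<Longrightarrow> pres_eq l R w w"
| sym: "pres_eq l R u v \<Longrightarrow> pres_eq l R v u"
| trans: "pres_eq l R u v \<Longrightarrow> pres_eq l R v w \<Longrightarrow> pres_eq l R u w"
| free: "valid_word l u \<Longrightarrow> valid_word l v \<Longrightarrow> i < l \<Longrightarrow>
           pres_eq l R (u @ [(i,b),(i,\<not> b)] @ v) (u @ v)"
| rel: "valid_word l u \<Longrightarrow> valid_word l v \<Longrightarrow> r \<in> R \<Longrightarrow> valid_word l r \<Longrightarrow>
           pres_eq l R (u @ r @ v) (u @ v)"

definition pres_class :: "nat \<Rightarrow> gword set \<Rightarrow> gword \<Rightarrow> gword set" where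
  "pres_class l R w = {w'. pres_eq l R w w'}"

definition presented_group :: "nat \<Rightarrow> gword set \<Rightarrow> gword set monoid" where
  "presented_group l R = \<lparr> carrier = pres_class l R ` {w. valid_word l w},
     monoid.mult = (\<lambda>A B. pres_class l R ((SOME a. a \<in> A) @ (SOME b. b \<in> B))),
     one = pres_class l R [] \<rparr>"

definition pres_gen :: "nat \<Rightarrow> gword set \<Rightarrow> nat \<Rightarrow> gword set" where
  "pres_gen l R i = pres_class l R [(i, True)]"

definition word_eval :: "('c,'e) monoid_scheme \<Rightarrow> (nat \<Rightarrow> 'c) \<Rightarrow> gword \<Rightarrow> 'c" where
  "word_eval K f w = foldr (\<lambda>(i,b) acc. (if b then f i else inv\<^bsub>K\<^esub> (f i)) \<otimes>\<^bsub>K\<^esub> acc) w \<one>\<^bsub>K\<^esub>"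

definition pres_map :: "('c,'e) monoid_scheme \<Rightarrow> (nat \<Rightarrow> 'c) \<Rightarrow> gword set \<Rightarrow> 'c" where
  "pres_map K f A = word_eval K f (SOME w. w \<in> A)"

text \<open>The nucleus is enumerated as n 0, ..., n (l-1). nidx i x is the index i(x) with
  n_{i(x)} the section of n_i at x.\<close>
definition nidx :: "('a \<Rightarrow> (nat \<Rightarrow> 'a) \<times> (nat \<Rightarrow> nat)) \<Rightarrow> (nat \<Rightarrow> 'a) \<Rightarrow> nat \<Rightarrow> nat \<Rightarrow> nat \<Rightarrow> nat" where
  "nidx \<Phi> n l i x = (THE j. j < l \<and> n j = fst (\<Phi> (n i)) x)"

definition un_relators :: "('a,'b) monoid_scheme \<Rightarrow> (nat \<Rightarrow> 'a) \<Rightarrow> nat \<Rightarrow> gword set" where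
  "un_relators G n l =
     {[(i,True)] | i. i < l \<and> n i = \<one>\<^bsub>G\<^esub>}
   \<union> {[(i,True),(j,True)] | i j. i < l \<and> j < l \<and> n i \<otimes>\<^bsub>G\<^esub> n j = \<one>\<^bsub>G\<^esub>}
   \<union> {[(i,True),(j,True),(k,True)] | i j k. i < l \<and> j < l \<and> k < l \<and>
        n i \<otimes>\<^bsub>G\<^esub> n j \<otimes>\<^bsub>G\<^esub> n k = \<one>\<^bsub>G\<^esub>}"

definition G0un :: "('a,'b) monoid_scheme \<Rightarrow> (nat \<Rightarrow> 'a) \<Rightarrow> nat \<Rightarrow> gword set monoid" where
  "G0un G n l = presented_group l (un_relators G n l)"

definition s_un :: "('a,'b) monoid_scheme \<Rightarrow> (nat \<Rightarrow> 'a) \<Rightarrow> nat \<Rightarrow> nat \<Rightarrow> gword set" where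
  "s_un G n l i = pres_gen l (un_relators G n l) i"

definition pi_un :: "('a,'b) monoid_scheme \<Rightarrow> (nat \<Rightarrow> 'a) \<Rightarrow> gword set \<Rightarrow> 'a" where
  "pi_un G n = pres_map G n"

definition phi_un :: "('a,'b) monoid_scheme \<Rightarrow> nat \<Rightarrow> ('a \<Rightarrow> (nat \<Rightarrow> 'a) \<times> (nat \<Rightarrow> nat)) \<Rightarrow> (nat \<Rightarrow> 'a) \<Rightarrow> nat
    \<Rightarrow> gword set \<Rightarrow> (nat \<Rightarrow> gword set) \<times> (nat \<Rightarrow> nat)" where
  "phi_un G d \<Phi> n l = pres_map (wreath (G0un G n l) d)
     (\<lambda>i. ((\<lambda>x\<in>{0..<d}. s_un G n l (nidx \<Phi> n l i x)), snd (\<Phi> (n i))))"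

text \<open>h x i is the chosen element h(x, n_i) of G0un.\<close>
definition E_set :: "('a,'b) monoid_scheme \<Rightarrow> nat \<Rightarrow> ('a \<Rightarrow> (nat \<Rightarrow> 'a) \<times> (nat \<Rightarrow> nat)) \<Rightarrow> (nat \<Rightarrow> 'a) \<Rightarrow> nat
    \<Rightarrow> (nat \<Rightarrow> nat \<Rightarrow> gword set) \<Rightarrow> gword set set" where
  "E_set G d \<Phi> n l h =
     {sect (phi_un G d \<Phi> n l)
        (sect (phi_un G d \<Phi> n l) (h x i) [x] \<otimes>\<^bsub>G0un G n l\<^esub> inv\<^bsub>G0un G n l\<^esub> (s_un G n l i)) v
      | x i v. x < d \<and> i < l \<and> v \<in> words d}"

definition H_std :: "('a,'b) monoid_scheme \<Rightarrow> nat \<Rightarrow> ('a \<Rightarrow> (nat \<Rightarrow> 'a) \<times> (nat \<Rightarrow> nat)) \<Rightarrow> (nat \<Rightarrow> 'a) \<Rightarrow> nat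
    \<Rightarrow> (nat \<Rightarrow> nat \<Rightarrow> gword set) \<Rightarrow> gword set set" where
  "H_std G d \<Phi> n l h = normal_closure (G0un G n l) (E_set G d \<Phi> n l h)"

definition G0_std :: "('a,'b) monoid_scheme \<Rightarrow> nat \<Rightarrow> ('a \<Rightarrow> (nat \<Rightarrow> 'a) \<times> (nat \<Rightarrow> nat)) \<Rightarrow> (nat \<Rightarrow> 'a) \<Rightarrow> nat
    \<Rightarrow> (nat \<Rightarrow> nat \<Rightarrow> gword set) \<Rightarrow> gword set set monoid" where
  "G0_std G d \<Phi> n l h = G0un G n l Mod H_std G d \<Phi> n l h"

definition pi_std :: "('a,'b) monoid_scheme \<Rightarrow> (nat \<Rightarrow> 'a) \<Rightarrow> gword set set \<Rightarrow> 'a" where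
  "pi_std G n C = pi_un G n (SOME a. a \<in> C)"

definition quot_wr :: "('a,'b) monoid_scheme \<Rightarrow> nat \<Rightarrow> ('a \<Rightarrow> (nat \<Rightarrow> 'a) \<times> (nat \<Rightarrow> nat)) \<Rightarrow> (nat \<Rightarrow> 'a) \<Rightarrow> nat
    \<Rightarrow> (nat \<Rightarrow> nat \<Rightarrow> gword set) \<Rightarrow> (nat \<Rightarrow> gword set) \<times> (nat \<Rightarrow> nat) \<Rightarrow> (nat \<Rightarrow> gword set set) \<times> (nat \<Rightarrow> nat)" where
  "quot_wr G d \<Phi> n l h = (\<lambda>(k,\<tau>). ((\<lambda>x\<in>{0..<d}. H_std G d \<Phi> n l h #>\<^bsub>G0un G n l\<^esub> k x), \<tau>))"

definition phi_1 :: "('a,'b) monoid_scheme \<Rightarrow> nat \<Rightarrow> ('a \<Rightarrow> (nat \<Rightarrow> 'a) \<times> (nat \<Rightarrow> nat)) \<Rightarrow> (nat \<Rightarrow> 'a) \<Rightarrow> nat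
    \<Rightarrow> (nat \<Rightarrow> nat \<Rightarrow> gword set) \<Rightarrow> gword set set \<Rightarrow> (nat \<Rightarrow> gword set set) \<times> (nat \<Rightarrow> nat)" where
  "phi_1 G d \<Phi> n l h C = quot_wr G d \<Phi> n l h (phi_un G d \<Phi> n l (SOME a. a \<in> C))"

definition wr_map :: "nat \<Rightarrow> ('c \<Rightarrow> 'a) \<Rightarrow> (nat \<Rightarrow> 'c) \<times> (nat \<Rightarrow> nat) \<Rightarrow> (nat \<Rightarrow> 'a) \<times> (nat \<Rightarrow> nat)" where
  "wr_map d p = (\<lambda>(k,\<tau>). ((\<lambda>x\<in>{0..<d}. p (k x)), \<tau>))"

end

theory Submission
  imports Defs
begin

section \<open>Wreath products with the symmetric group\<close>

lemma wreath_carrier: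
  "carrier (wreath K d) = (Pi\<^sub>E {0..<d} (\<lambda>_. carrier K)) \<times> {\<tau>. \<tau> permutes {0..<d}}"
  by (simp add: wreath_def)

lemma wreath_mult:
  "a \<otimes>\<^bsub>wreath K d\<^esub> b = ((\<lambda>x\<in>{0..<d}. fst a x \<otimes>\<^bsub>K\<^esub> fst b (snd a x)), snd b \<circ> snd a)"
  by (simp add: wreath_def)

lemma wreath_one: "\<one>\<^bsub>wreath K d\<^esub> = ((\<lambda>x\<in>{0..<d}. \<one>\<^bsub>K\<^esub>), id)"
  by (simp add: wreath_def)

lemma wreath_mult_fst: "x < d \<Longrightarrow> fst (a \<otimes>\<^bsub>wreath K d\<^esub> b) x = fst a x \<otimes>\<^bsub>K\<^esub> fst b (snd a x)"
  by (simp add: wreath_mult)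

lemma wreath_mult_snd: "snd (a \<otimes>\<^bsub>wreath K d\<^esub> b) = snd b \<circ> snd a"
  by (simp add: wreath_mult)

lemma permutes_less: "\<tau> permutes {0..<d::nat} \<Longrightarrow> x < d \<Longrightarrow> \<tau> x < d"
  using permutes_in_image[of \<tau> "{0..<d}" x] by auto

lemma wreath_group:
  assumes "group K"
  shows "group (wreath K d)"
proof -
  interpret K: group K by fact
  show ?thesis
  proof (rule groupI)
    fix a b assume "a \<in> carrier (wreath K d)" "b \<in> carrier (wreath K d)"
    then show "a \<otimes>\<^bsub>wreath K d\<^esub> b \<in> carrier (wreath K d)"
      by (auto simp: wreath_carrier wreath_mult PiE_iff permutes_less permutes_compose)
  next
    show "\<one>\<^bsub>wreath K d\<^esub> \<in> carrier (wreath K d)"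
      by (auto simp: wreath_carrier wreath_one permutes_id)
  next
    fix a b c assume "a \<in> carrier (wreath K d)" "b \<in> carrier (wreath K d)" "c \<in> carrier (wreath K d)"
    then show "a \<otimes>\<^bsub>wreath K d\<^esub> b \<otimes>\<^bsub>wreath K d\<^esub> c = a \<otimes>\<^bsub>wreath K d\<^esub> (b \<otimes>\<^bsub>wreath K d\<^esub> c)"
      by (auto simp: wreath_carrier wreath_mult PiE_iff permutes_less K.m_assoc intro!: restrict_ext)
  next
    fix a assume "a \<in> carrier (wreath K d)"
    then show "\<one>\<^bsub>wreath K d\<^esub> \<otimes>\<^bsub>wreath K d\<^esub> a = a"
      by (cases a) (auto simp: wreath_carrier wreath_mult wreath_one PiE_iff permutes_less
          fun_eq_iff extensional_def)
  next
    fix a assume a: "a \<in> carrier (wreath K d)"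
    obtain g \<tau> where a_eq: "a = (g, \<tau>)" and g: "g \<in> Pi\<^sub>E {0..<d} (\<lambda>_. carrier K)"
      and t: "\<tau> permutes {0..<d}"
      using a by (cases a) (auto simp: wreath_carrier)
    \<comment> \<open>The inverse of (g, tau) is ((g (tau^-1 x))^-1)_x, tau^-1).\<close>
    define y where "y = ((\<lambda>x\<in>{0..<d}. inv\<^bsub>K\<^esub> (g (Hilbert_Choice.inv \<tau> x))), Hilbert_Choice.inv \<tau>)"
    have ti: "Hilbert_Choice.inv \<tau> permutes {0..<d}" using t by (rule permutes_inv)
    have "y \<in> carrier (wreath K d)"
      using g ti by (auto simp: y_def wreath_carrier PiE_iff permutes_less)
    moreover have "y \<otimes>\<^bsub>wreath K d\<^esub> a = \<one>\<^bsub>wreath K d\<^esub>"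
      using g ti t by (auto simp: y_def a_eq wreath_mult wreath_one PiE_iff permutes_less
          permutes_inv_o intro!: restrict_ext)
    ultimately show "\<exists>y\<in>carrier (wreath K d). y \<otimes>\<^bsub>wreath K d\<^esub> a = \<one>\<^bsub>wreath K d\<^esub>" by blast
  qed
qed

lemma wreath_eq_one:
  assumes "a \<in> carrier (wreath K d)" "\<And>x. x < d \<Longrightarrow> fst a x = \<one>\<^bsub>K\<^esub>" "snd a = id"
  shows "a = \<one>\<^bsub>wreath K d\<^esub>"
proof -
  have "fst a = (\<lambda>x\<in>{0..<d}. \<one>\<^bsub>K\<^esub>)"
    using assms(1,2) by (auto simp: wreath_carrier PiE_iff extensional_def fun_eq_iff)
  then show ?thesis using assms(3) by (cases a) (simp add: wreath_one)
qed

lemma wr_map_fst: "x < d \<Longrightarrow> fst (wr_map d p k) x = p (fst k x)"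
  by (cases k) (simp add: wr_map_def)

lemma wr_map_snd: "snd (wr_map d p k) = snd k"
  by (cases k) (simp add: wr_map_def)

lemma wr_map_hom:
  assumes "p \<in> hom K1 K2"
  shows "wr_map d p \<in> hom (wreath K1 d) (wreath K2 d)"
  using assms
  by (auto simp: hom_def wr_map_def wreath_carrier wreath_mult PiE_iff permutes_less Pi_def
      intro!: restrict_ext)

lemma hom_comp: "f \<in> hom A B \<Longrightarrow> g \<in> hom B C \<Longrightarrow> (\<lambda>x. g (f x)) \<in> hom A C"
  by (auto simp: hom_def Pi_def)

lemma hom_group_hom: "group A \<Longrightarrow> group B \<Longrightarrow> f \<in> hom A B \<Longrightarrow> group_hom A B f"
  by (intro group_hom.intro group_hom_axioms.intro)

section \<open>Presented groups and their universal property\<close>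

lemma valid_word_simps [simp]:
  "valid_word l []"
  "valid_word l (x # w) \<longleftrightarrow> fst x < l \<and> valid_word l w"
  "valid_word l (u @ v) \<longleftrightarrow> valid_word l u \<and> valid_word l v"
  by (auto simp: valid_word_def mem_Times_iff)

lemma pres_eq_valid: "pres_eq l R u v \<Longrightarrow> valid_word l u \<and> valid_word l v"
  by (induction rule: pres_eq.induct) auto

lemma pres_eq_app_left: "pres_eq l R u v \<Longrightarrow> valid_word l w \<Longrightarrow> pres_eq l R (w @ u) (w @ v)"
proof (induction rule: pres_eq.induct)
  case (free u v i b)
  then show ?case using pres_eq.free[of l "w @ u" v i R b] by simp
next
  case (rel u v r)
  then show ?case using pres_eq.rel[of l "w @ u" v r R] by simp
qed (auto intro: pres_eq.intros)

lemma pres_eq_app_right: "pres_eq l R u v \<Longrightarrow> valid_word l w \<Longrightarrow> pres_eq l R (u @ w) (v @ w)"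
proof (induction rule: pres_eq.induct)
  case (free u v i b)
  then show ?case using pres_eq.free[of l u "v @ w" i R b] by simp
next
  case (rel u v r)
  then show ?case using pres_eq.rel[of l u "v @ w" r R] by simp
qed (auto intro: pres_eq.intros)

lemma pres_eq_app: "pres_eq l R u u' \<Longrightarrow> pres_eq l R v v' \<Longrightarrow> pres_eq l R (u @ v) (u' @ v')"
  by (meson pres_eq.trans pres_eq_app_left pres_eq_app_right pres_eq_valid)

lemma pres_class_eq: "pres_eq l R u v \<Longrightarrow> pres_class l R u = pres_class l R v"
  unfolding pres_class_def by (auto intro: pres_eq.trans pres_eq.sym)

lemma pres_class_some: "valid_word l w \<Longrightarrow> pres_eq l R w (SOME a. a \<in> pres_class l R w)"
proof -
  assume "valid_word l w"
  then have "w \<in> pres_class l R w" by (simp add: pres_class_def pres_eq.refl)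
  then have "(SOME a. a \<in> pres_class l R w) \<in> pres_class l R w" by (rule someI)
  then show ?thesis by (simp add: pres_class_def)
qed

lemma pres_carrier: "carrier (presented_group l R) = pres_class l R ` {w. valid_word l w}"
  by (simp add: presented_group_def)

lemma pres_one: "\<one>\<^bsub>presented_group l R\<^esub> = pres_class l R []"
  by (simp add: presented_group_def)

lemma pres_mult_class:
  assumes "valid_word l u" "valid_word l v"
  shows "pres_class l R u \<otimes>\<^bsub>presented_group l R\<^esub> pres_class l R v = pres_class l R (u @ v)"
proof -
  have "pres_eq l R (u @ v) ((SOME a. a \<in> pres_class l R u) @ (SOME b. b \<in> pres_class l R v))"
    using assms by (intro pres_eq_app pres_class_some)
  then show ?thesis
    by (simp add: presented_group_def pres_class_eq)
qed

definition winv :: "gword \<Rightarrow> gword" where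
  "winv w = rev (map (\<lambda>(i,b). (i, \<not> b)) w)"

lemma winv_valid: "valid_word l w \<Longrightarrow> valid_word l (winv w)"
  by (auto simp: valid_word_def winv_def)

lemma winv_eq: "valid_word l w \<Longrightarrow> pres_eq l R (winv w @ w) []"
proof (induction w)
  case Nil then show ?case by (simp add: winv_def pres_eq.refl)
next
  case (Cons x w)
  obtain i b where x: "x = (i, b)" by (cases x)
  have v: "valid_word l (winv w)" "valid_word l w" "i < l"
    using Cons.prems x by (auto intro: winv_valid)
  have "winv (x # w) @ (x # w) = winv w @ [(i, \<not> b), (i, \<not> \<not> b)] @ w"
    by (simp add: winv_def x)
  moreover have "pres_eq l R (winv w @ [(i, \<not> b), (i, \<not> \<not> b)] @ w) (winv w @ w)"
    using v by (rule pres_eq.free)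
  ultimately show ?case using Cons v by (metis pres_eq.trans)
qed

lemma presented_group_is_group: "group (presented_group l R)"
proof (rule groupI)
  fix a assume "a \<in> carrier (presented_group l R)"
  then obtain w where w: "valid_word l w" "a = pres_class l R w" by (auto simp: pres_carrier)
  then have "pres_class l R (winv w) \<otimes>\<^bsub>presented_group l R\<^esub> a = \<one>\<^bsub>presented_group l R\<^esub>"
    by (simp add: pres_mult_class winv_valid pres_one pres_class_eq winv_eq)
  moreover have "pres_class l R (winv w) \<in> carrier (presented_group l R)"
    using w by (auto simp: pres_carrier winv_valid)
  ultimately show "\<exists>y\<in>carrier (presented_group l R). y \<otimes>\<^bsub>presented_group l R\<^esub> a = \<one>\<^bsub>presented_group l R\<^esub>"
    by blast
qed (auto simp: pres_carrier pres_mult_class pres_one)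

lemma pres_gen_carrier: "i < l \<Longrightarrow> pres_gen l R i \<in> carrier (presented_group l R)"
  by (auto simp: pres_gen_def pres_carrier intro!: image_eqI[where x="[(i,True)]"])

lemma pres_rel_one: "r \<in> R \<Longrightarrow> valid_word l r \<Longrightarrow> pres_class l R r = \<one>\<^bsub>presented_group l R\<^esub>"
  using pres_eq.rel[of l "[]" "[]" r R] by (simp add: pres_one pres_class_eq)

lemma word_eval_Nil [simp]: "word_eval K f [] = \<one>\<^bsub>K\<^esub>"
  by (simp add: word_eval_def)

lemma word_eval_Cons [simp]:
  "word_eval K f ((i,b) # w) = (if b then f i else inv\<^bsub>K\<^esub> (f i)) \<otimes>\<^bsub>K\<^esub> word_eval K f w"
  by (simp add: word_eval_def)

lemma word_eval_subgroup:
  assumes "group K" "subgroup T K" "\<And>i. i \<in> fst ` set w \<Longrightarrow> f i \<in> T"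
  shows "word_eval K f w \<in> T"
  using assms(3)
proof (induction w)
  case Nil then show ?case using assms(2) by (simp add: subgroup.one_closed)
next
  case (Cons x w)
  obtain i b where x: "x = (i,b)" by (cases x)
  have "f i \<in> T" "word_eval K f w \<in> T" using Cons x by auto
  then show ?case using x assms(1,2)
    by (auto simp: subgroup.m_closed subgroup.m_inv_closed)
qed

lemma word_eval_carrier:
  assumes "group K" "\<And>i. i \<in> fst ` set w \<Longrightarrow> f i \<in> carrier K"
  shows "word_eval K f w \<in> carrier K"
  using word_eval_subgroup[OF assms(1) group.subgroup_self[OF assms(1)]] assms(2) .

lemma word_eval_append:
  assumes "group K" "\<And>i. i \<in> fst ` set u \<Longrightarrow> f i \<in> carrier K" "\<And>i. i \<in> fst ` set v \<Longrightarrow> f i \<in> carrier K"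
  shows "word_eval K f (u @ v) = word_eval K f u \<otimes>\<^bsub>K\<^esub> word_eval K f v"
  using assms(2)
proof (induction u)
  case Nil then show ?case using word_eval_carrier[OF assms(1,3)] assms(1)
    by (simp add: group.is_monoid monoid.l_one)
next
  case (Cons x u)
  interpret K: group K by fact
  obtain i b where x: "x = (i,b)" by (cases x)
  have "word_eval K f u \<in> carrier K" "word_eval K f v \<in> carrier K" "f i \<in> carrier K"
    using Cons.prems x word_eval_carrier[OF assms(1,3)] word_eval_carrier[OF assms(1), of u f] by auto
  then show ?case using Cons x by (simp add: K.m_assoc)
qed

lemma word_eval_class:
  assumes "valid_word l w"
  shows "pres_class l R w = word_eval (presented_group l R) (pres_gen l R) w"
  using assms
proof (induction w)
  case Nil then show ?case by (simp add: pres_one)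
next
  case (Cons x w)
  interpret P: group "presented_group l R" by (rule presented_group_is_group)
  obtain i b where x: "x = (i,b)" by (cases x)
  have il: "i < l" and vw: "valid_word l w" using Cons.prems x by auto
  have split: "pres_class l R ((i,b) # w) = pres_class l R [(i,b)] \<otimes>\<^bsub>presented_group l R\<^esub> pres_class l R w"
    using il vw by (simp add: pres_mult_class)
  have "pres_class l R [(i,b)] = (if b then pres_gen l R i else inv\<^bsub>presented_group l R\<^esub> pres_gen l R i)"
  proof (cases b)
    case True then show ?thesis by (simp add: pres_gen_def)
  next
    case False
    have "pres_class l R [(i,False)] \<otimes>\<^bsub>presented_group l R\<^esub> pres_gen l R i = \<one>\<^bsub>presented_group l R\<^esub>"
      using il pres_eq.free[of l "[]" "[]" i R False]
      by (simp add: pres_gen_def pres_mult_class pres_one pres_class_eq)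
    moreover have "pres_class l R [(i,False)] \<in> carrier (presented_group l R)"
      using il by (auto simp: pres_carrier intro!: image_eqI[where x="[(i,False)]"])
    ultimately have "inv\<^bsub>presented_group l R\<^esub> pres_gen l R i = pres_class l R [(i,False)]"
      using P.inv_equality pres_gen_carrier[OF il] by blast
    then show ?thesis using False by simp
  qed
  then show ?case using split Cons vw x by simp
qed

lemma pres_carrier_word:
  assumes "a \<in> carrier (presented_group l R)"
  shows "\<exists>w. valid_word l w \<and> a = word_eval (presented_group l R) (pres_gen l R) w"
  using assms word_eval_class by (auto simp: pres_carrier)

locale pres_assignment =
  fixes K :: "('c,'e) monoid_scheme" and l :: nat and R :: "gword set" and f :: "nat \<Rightarrow> 'c"
  assumes grp: "group K"
    and gen_car: "\<And>i. i < l \<Longrightarrow> f i \<in> carrier K"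
    and rel_one: "\<And>r. r \<in> R \<Longrightarrow> valid_word l r \<Longrightarrow> word_eval K f r = \<one>\<^bsub>K\<^esub>"
begin

interpretation K: group K by (rule grp)

lemma valid_carrier: "valid_word l w \<Longrightarrow> word_eval K f w \<in> carrier K"
  using gen_car by (intro word_eval_carrier[OF grp]) (auto simp: valid_word_def)

lemma valid_append:
  "valid_word l u \<Longrightarrow> valid_word l v \<Longrightarrow> word_eval K f (u @ v) = word_eval K f u \<otimes>\<^bsub>K\<^esub> word_eval K f v"
  using gen_car by (intro word_eval_append[OF grp]) (auto simp: valid_word_def)

lemma respects: "pres_eq l R u v \<Longrightarrow> word_eval K f u = word_eval K f v"
proof (induction rule: pres_eq.induct)
  case (free u v i b)
  have fi: "f i \<in> carrier K" using free gen_car by auto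
  have "word_eval K f ([(i, b), (i, \<not> b)] @ v) = word_eval K f v"
    using fi free valid_carrier[of v] by (cases b) (simp_all add: K.m_assoc[symmetric])
  moreover have "valid_word l ([(i, b), (i, \<not> b)] @ v)" using free by simp
  ultimately show ?case using free valid_append[of u "[(i, b), (i, \<not> b)] @ v"] valid_append[of u v]
    by simp
next
  case (rel u v r)
  then show ?case by (simp add: valid_carrier valid_append rel_one)
qed auto

lemma pres_map_class: "valid_word l w \<Longrightarrow> pres_map K f (pres_class l R w) = word_eval K f w"
  unfolding pres_map_def using respects pres_class_some by metis

lemma pres_map_hom: "pres_map K f \<in> hom (presented_group l R) K"
  by (auto simp: hom_def pres_carrier pres_map_class pres_mult_class valid_carrier valid_append)

lemma pres_map_gen: "i < l \<Longrightarrow> pres_map K f (pres_gen l R i) = f i"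
  using pres_map_class[of "[(i,True)]"] gen_car[of i] by (simp add: pres_gen_def)

end

lemma hom_word_eval:
  assumes "group K1" "group K2" "\<phi> \<in> hom K1 K2" "\<And>i. i \<in> fst ` set w \<Longrightarrow> f i \<in> carrier K1"
  shows "\<phi> (word_eval K1 f w) = word_eval K2 (\<lambda>i. \<phi> (f i)) w"
proof -
  interpret gh: group_hom K1 K2 \<phi> using assms(1-3) by (rule hom_group_hom)
  show ?thesis
    using assms(4)
  proof (induction w)
    case (Cons x w)
    obtain i b where x: "x = (i,b)" by (cases x)
    have "f i \<in> carrier K1" "word_eval K1 f w \<in> carrier K1"
      using Cons.prems x word_eval_carrier[OF assms(1), of w f] by auto
    then show ?case using Cons x by (simp add: gh.hom_mult gh.hom_inv)
  qed simp
qed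

lemma word_eval_cong:
  "(\<And>i. i \<in> fst ` set w \<Longrightarrow> f i = g i) \<Longrightarrow> word_eval K f w = word_eval K g w"
proof (induction w)
  case (Cons x w)
  then show ?case by (cases x) auto
qed simp

lemma pres_hom_eq:
  assumes "group K" "\<phi> \<in> hom (presented_group l R) K" "\<psi> \<in> hom (presented_group l R) K"
    and "\<And>i. i < l \<Longrightarrow> \<phi> (pres_gen l R i) = \<psi> (pres_gen l R i)"
    and "a \<in> carrier (presented_group l R)"
  shows "\<phi> a = \<psi> a"
proof -
  obtain w where w: "valid_word l w" "a = word_eval (presented_group l R) (pres_gen l R) w"
    using pres_carrier_word[OF assms(5)] by blast
  have g: "\<And>i. i \<in> fst ` set w \<Longrightarrow> pres_gen l R i \<in> carrier (presented_group l R)"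
    using w(1) by (auto simp: valid_word_def pres_gen_carrier)
  have "\<phi> a = word_eval K (\<lambda>i. \<phi> (pres_gen l R i)) w"
    using w hom_word_eval[OF presented_group_is_group assms(1,2) g] by simp
  also have "\<dots> = word_eval K (\<lambda>i. \<psi> (pres_gen l R i)) w"
    using w(1) assms(4) by (intro word_eval_cong) (auto simp: valid_word_def)
  also have "\<dots> = \<psi> a"
    using w hom_word_eval[OF presented_group_is_group assms(1,3) g] by simp
  finally show ?thesis .
qed

section \<open>Sections in self-similar groups\<close>

lemma words_Nil [simp]: "[] \<in> words d" by (simp add: words_def)
lemma words_Cons [simp]: "x # w \<in> words d \<longleftrightarrow> x < d \<and> w \<in> words d" by (auto simp: words_def)
lemma words_append [simp]: "u @ w \<in> words d \<longleftrightarrow> u \<in> words d \<and> w \<in> words d" by (auto simp: words_def)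

lemma finite_words_length: "finite {v \<in> words d. length v = k}"
  by (rule finite_subset[OF _ finite_lists_length_eq[OF finite_atLeastLessThan[of 0 d], of k]])
     (auto simp: words_def)

lemma sect_append: "sect \<Phi> a (u @ v) = sect \<Phi> (sect \<Phi> a u) v"
  by (induction u arbitrary: a) auto

definition sections_eventually_in ::
    "nat \<Rightarrow> ('a \<Rightarrow> (nat \<Rightarrow> 'a) \<times> (nat \<Rightarrow> nat)) \<Rightarrow> 'a set \<Rightarrow> 'a \<Rightarrow> bool" where
  "sections_eventually_in d \<Phi> S g \<longleftrightarrow> (\<exists>k. \<forall>v\<in>words d. k \<le> length v \<longrightarrow> sect \<Phi> g v \<in> S)"

lemma contracting_set_iff:
  "contracting_set K d \<Phi> M \<longleftrightarrow>
     finite M \<and> M \<subseteq> carrier K \<and> (\<forall>g\<in>carrier K. sections_eventually_in d \<Phi> M g)"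
  by (simp add: contracting_set_def sections_eventually_in_def)

lemma sections_eventually_in_uniform:
  assumes "finite I" "\<And>i. i \<in> I \<Longrightarrow> sections_eventually_in d \<Phi> S (g i)"
  shows "\<exists>k. \<forall>i\<in>I. \<forall>v\<in>words d. k \<le> length v \<longrightarrow> sect \<Phi> (g i) v \<in> S"
proof -
  obtain kf where kf: "\<forall>i\<in>I. \<forall>v\<in>words d. kf i \<le> length v \<longrightarrow> sect \<Phi> (g i) v \<in> S"
    using assms(2) unfolding sections_eventually_in_def by metis
  have "kf i \<le> sum kf I" if "i \<in> I" for i
    using assms(1) that by (intro member_le_sum) auto
  then show ?thesis using kf by (intro exI[of _ "sum kf I"]) force
qed

lemma sections_eventually_in_prefix:
  assumes "\<And>v. v \<in> words d \<Longrightarrow> length v = L \<Longrightarrow> sections_eventually_in d \<Phi> S (sect \<Phi> a v)"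
  shows "sections_eventually_in d \<Phi> S a"
proof -
  obtain k where k: "\<forall>v\<in>{v \<in> words d. length v = L}. \<forall>u\<in>words d.
      k \<le> length u \<longrightarrow> sect \<Phi> (sect \<Phi> a v) u \<in> S"
    using sections_eventually_in_uniform[of "{v \<in> words d. length v = L}" d \<Phi> S "sect \<Phi> a"]
      finite_words_length assms by auto
  show ?thesis unfolding sections_eventually_in_def
  proof (intro exI[of _ "L + k"] ballI impI)
    fix u assume u: "u \<in> words d" "L + k \<le> length u"
    have "take L u \<in> words d" "drop L u \<in> words d"
      using u(1) by (metis append_take_drop_id words_append)+
    moreover have "length (take L u) = L" "k \<le> length (drop L u)" using u(2) by auto
    ultimately have "sect \<Phi> (sect \<Phi> a (take L u)) (drop L u) \<in> S" using k by blast
    then show "sect \<Phi> a u \<in> S" by (simp add: sect_append[symmetric])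
  qed
qed

text \<open>The sections at the letter x of the elements fixing x; self-replication says that this
  is the whole group for every x.\<close>

definition stab_sections ::
    "('a,'b) monoid_scheme \<Rightarrow> ('a \<Rightarrow> (nat \<Rightarrow> 'a) \<times> (nat \<Rightarrow> nat)) \<Rightarrow> nat \<Rightarrow> 'a set" where
  "stab_sections K \<Phi> x = {g \<in> carrier K. \<exists>h\<in>carrier K. snd (\<Phi> h) x = x \<and> fst (\<Phi> h) x = g}"

locale ssg =
  fixes K :: "('a,'b) monoid_scheme" and d :: nat and \<Phi> :: "'a \<Rightarrow> (nat \<Rightarrow> 'a) \<times> (nat \<Rightarrow> nat)"
  assumes grp: "group K" and Phi_hom: "\<Phi> \<in> hom K (wreath K d)"
begin

interpretation K: group K by (rule grp)

lemma Phi_group_hom: "group_hom K (wreath K d) \<Phi>"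
  using grp wreath_group[OF grp] Phi_hom by (rule hom_group_hom)

lemma Phi_car: "a \<in> carrier K \<Longrightarrow> \<Phi> a \<in> carrier (wreath K d)"
  using Phi_hom by (auto simp: hom_def)

lemma fst_car: "a \<in> carrier K \<Longrightarrow> x < d \<Longrightarrow> fst (\<Phi> a) x \<in> carrier K"
  using Phi_car[of a] by (auto simp: wreath_carrier PiE_iff mem_Times_iff)

lemma fst_ext: "a \<in> carrier K \<Longrightarrow> fst (\<Phi> a) \<in> extensional {0..<d}"
  using Phi_car[of a] by (auto simp: wreath_carrier PiE_iff mem_Times_iff)

lemma snd_perm: "a \<in> carrier K \<Longrightarrow> snd (\<Phi> a) permutes {0..<d}"
  using Phi_car[of a] by (auto simp: wreath_carrier mem_Times_iff)

lemma snd_less: "a \<in> carrier K \<Longrightarrow> x < d \<Longrightarrow> snd (\<Phi> a) x < d"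
  using snd_perm permutes_less by blast

lemma fst_mult: "a \<in> carrier K \<Longrightarrow> b \<in> carrier K \<Longrightarrow> x < d \<Longrightarrow>
    fst (\<Phi> (a \<otimes>\<^bsub>K\<^esub> b)) x = fst (\<Phi> a) x \<otimes>\<^bsub>K\<^esub> fst (\<Phi> b) (snd (\<Phi> a) x)"
  using Phi_hom by (simp add: hom_mult wreath_mult)

lemma snd_mult: "a \<in> carrier K \<Longrightarrow> b \<in> carrier K \<Longrightarrow>
    snd (\<Phi> (a \<otimes>\<^bsub>K\<^esub> b)) = snd (\<Phi> b) \<circ> snd (\<Phi> a)"
  using Phi_hom by (simp add: hom_mult wreath_mult)

lemma fst_one: "x < d \<Longrightarrow> fst (\<Phi> \<one>\<^bsub>K\<^esub>) x = \<one>\<^bsub>K\<^esub>"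
  by (simp add: group_hom.hom_one[OF Phi_group_hom] wreath_one)

lemma snd_one: "snd (\<Phi> \<one>\<^bsub>K\<^esub>) = id"
  by (simp add: group_hom.hom_one[OF Phi_group_hom] wreath_one)

lemma act_words: "a \<in> carrier K \<Longrightarrow> v \<in> words d \<Longrightarrow> act \<Phi> a v \<in> words d"
  by (induction v arbitrary: a) (auto simp: snd_less fst_car)

lemma sect_car: "a \<in> carrier K \<Longrightarrow> v \<in> words d \<Longrightarrow> sect \<Phi> a v \<in> carrier K"
  by (induction v arbitrary: a) (auto simp: fst_car)

lemma sect_mult: "a \<in> carrier K \<Longrightarrow> b \<in> carrier K \<Longrightarrow> v \<in> words d \<Longrightarrow>
   sect \<Phi> (a \<otimes>\<^bsub>K\<^esub> b) v = sect \<Phi> a v \<otimes>\<^bsub>K\<^esub> sect \<Phi> b (act \<Phi> a v)"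
  by (induction v arbitrary: a b) (auto simp: fst_mult fst_car snd_less)

lemma sect_one: "v \<in> words d \<Longrightarrow> sect \<Phi> \<one>\<^bsub>K\<^esub> v = \<one>\<^bsub>K\<^esub>"
  by (induction v) (auto simp: fst_one)

lemma sect_inv:
  assumes g: "g \<in> carrier K" and w: "w \<in> words d"
  shows "sect \<Phi> g w = inv\<^bsub>K\<^esub> (sect \<Phi> (inv\<^bsub>K\<^esub> g) (act \<Phi> g w))"
proof -
  have gi: "inv\<^bsub>K\<^esub> g \<in> carrier K" and aw: "act \<Phi> g w \<in> words d"
    using g w by (simp_all add: act_words)
  have "\<one>\<^bsub>K\<^esub> = sect \<Phi> (g \<otimes>\<^bsub>K\<^esub> inv\<^bsub>K\<^esub> g) w" using g w by (simp add: sect_one)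
  also have "\<dots> = sect \<Phi> g w \<otimes>\<^bsub>K\<^esub> sect \<Phi> (inv\<^bsub>K\<^esub> g) (act \<Phi> g w)"
    using g gi w by (rule sect_mult)
  finally show ?thesis
    using sect_car[OF g w] sect_car[OF gi aw] by (metis K.inv_equality K.inv_inv K.inv_comm)
qed

lemma stab_sections_subgroup:
  assumes x: "x < d"
  shows "subgroup (stab_sections K \<Phi> x) K"
proof (rule K.subgroupI)
  show "stab_sections K \<Phi> x \<subseteq> carrier K" by (auto simp: stab_sections_def)
  show "stab_sections K \<Phi> x \<noteq> {}"
    using x fst_one snd_one by (auto simp: stab_sections_def intro!: bexI[of _ "\<one>\<^bsub>K\<^esub>"])
next
  fix a assume "a \<in> stab_sections K \<Phi> x"
  then obtain h where h: "a \<in> carrier K" "h \<in> carrier K" "snd (\<Phi> h) x = x" "fst (\<Phi> h) x = a"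
    by (auto simp: stab_sections_def)
  have hi: "inv\<^bsub>K\<^esub> h \<in> carrier K" using h by simp
  have "\<one>\<^bsub>K\<^esub> = a \<otimes>\<^bsub>K\<^esub> fst (\<Phi> (inv\<^bsub>K\<^esub> h)) x"
    using fst_mult[OF h(2) hi x] h x by (simp add: fst_one)
  then have "fst (\<Phi> (inv\<^bsub>K\<^esub> h)) x = inv\<^bsub>K\<^esub> a"
    using h(1) fst_car[OF hi x] by (metis K.inv_char K.inv_comm)
  moreover have "snd (\<Phi> (inv\<^bsub>K\<^esub> h)) x = x"
    using arg_cong[OF snd_mult[OF h(2) hi], of "\<lambda>\<sigma>. \<sigma> x"] h hi by (simp add: snd_one)
  ultimately show "inv\<^bsub>K\<^esub> a \<in> stab_sections K \<Phi> x"
    using h hi by (auto simp: stab_sections_def)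
next
  fix a b assume "a \<in> stab_sections K \<Phi> x" "b \<in> stab_sections K \<Phi> x"
  then obtain ha hb where h: "a \<in> carrier K" "ha \<in> carrier K" "snd (\<Phi> ha) x = x" "fst (\<Phi> ha) x = a"
      "b \<in> carrier K" "hb \<in> carrier K" "snd (\<Phi> hb) x = x" "fst (\<Phi> hb) x = b"
    by (auto simp: stab_sections_def)
  then have "snd (\<Phi> (ha \<otimes>\<^bsub>K\<^esub> hb)) x = x" "fst (\<Phi> (ha \<otimes>\<^bsub>K\<^esub> hb)) x = a \<otimes>\<^bsub>K\<^esub> b"
    using x by (simp_all add: fst_mult snd_mult)
  then show "a \<otimes>\<^bsub>K\<^esub> b \<in> stab_sections K \<Phi> x"
    using h by (auto simp: stab_sections_def intro!: bexI[of _ "ha \<otimes>\<^bsub>K\<^esub> hb"])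
qed

lemma self_replicating_from_generators:
  assumes gen: "\<And>x i. x < d \<Longrightarrow> i < l \<Longrightarrow> f i \<in> stab_sections K \<Phi> x"
    and words: "\<And>g. g \<in> carrier K \<Longrightarrow> \<exists>w. valid_word l w \<and> g = word_eval K f w"
  shows "self_replicating K d \<Phi>"
  unfolding self_replicating_def
proof (intro ballI allI impI)
  fix g x assume g: "g \<in> carrier K" and x: "x < d"
  obtain w where w: "valid_word l w" "g = word_eval K f w" using words[OF g] by blast
  have "g \<in> stab_sections K \<Phi> x"
    using w gen[OF x] by (auto simp: valid_word_def
        intro!: word_eval_subgroup[OF grp stab_sections_subgroup[OF x]])
  then show "\<exists>h\<in>carrier K. snd (\<Phi> h) x = x \<and> fst (\<Phi> h) x = g"
    by (simp add: stab_sections_def)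
qed

end

lemma sect_semiconj:
  assumes "ssg K1 d \<Phi>1" "\<And>a. a \<in> carrier K1 \<Longrightarrow> wr_map d p (\<Phi>1 a) = \<Phi>2 (p a)"
  shows "a \<in> carrier K1 \<Longrightarrow> v \<in> words d \<Longrightarrow> p (sect \<Phi>1 a v) = sect \<Phi>2 (p a) v"
proof (induction v arbitrary: a)
  case (Cons x w)
  have "p (sect \<Phi>1 (fst (\<Phi>1 a) x) w) = sect \<Phi>2 (p (fst (\<Phi>1 a) x)) w"
    using Cons ssg.fst_car[OF assms(1)] by auto
  also have "p (fst (\<Phi>1 a) x) = fst (\<Phi>2 (p a)) x"
    using Cons.prems assms(2)[of a] wr_map_fst[of x d p "\<Phi>1 a"] by auto
  finally show ?case by simp
qed simp

section \<open>The nucleus\<close>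

locale ssg_nucleus = ssg +
  fixes N
  assumes nucleus: "is_nucleus K d \<Phi> N" and d_pos: "0 < d"
begin

interpretation K: group K by (rule grp)

lemma N_min: "contracting_set K d \<Phi> M \<Longrightarrow> N \<subseteq> M"
  using nucleus by (simp add: is_nucleus_def)

lemma N_sub: "N \<subseteq> carrier K" and N_fin: "finite N"
  and N_contr: "g \<in> carrier K \<Longrightarrow> sections_eventually_in d \<Phi> N g"
  using nucleus by (simp_all add: is_nucleus_def contracting_set_iff)

text \<open>Minimality is used through subsets of N: a subset of N still satisfying the
  contraction property is all of N.\<close>

lemma N_sub_contracting:
  assumes "\<And>g. g \<in> carrier K \<Longrightarrow> sections_eventually_in d \<Phi> {m \<in> N. P m} g"
  shows "m \<in> N \<Longrightarrow> P m"
proof -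
  have "contracting_set K d \<Phi> {m \<in> N. P m}"
    using assms N_fin N_sub by (auto simp: contracting_set_iff)
  then show "m \<in> N \<Longrightarrow> P m" using N_min by blast
qed

lemma one_in_N: "\<one>\<^bsub>K\<^esub> \<in> N"
proof -
  obtain k where k: "\<forall>v\<in>words d. k \<le> length v \<longrightarrow> sect \<Phi> \<one>\<^bsub>K\<^esub> v \<in> N"
    using N_contr[of "\<one>\<^bsub>K\<^esub>"] by (auto simp: sections_eventually_in_def)
  have "replicate k 0 \<in> words d" using d_pos by (auto simp: words_def)
  then show ?thesis using k sect_one by fastforce
qed

lemma N_sect: "m \<in> N \<Longrightarrow> v \<in> words d \<Longrightarrow> sect \<Phi> m v \<in> N"
proof -
  have "sections_eventually_in d \<Phi> {m \<in> N. \<forall>v\<in>words d. sect \<Phi> m v \<in> N} g" if g: "g \<in> carrier K" for g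
  proof -
    obtain k where k: "\<forall>v\<in>words d. k \<le> length v \<longrightarrow> sect \<Phi> g v \<in> N"
      using N_contr[OF g] by (auto simp: sections_eventually_in_def)
    then show ?thesis unfolding sections_eventually_in_def
      by (intro exI[of _ k]) (auto simp: sect_append[symmetric])
  qed
  then show "m \<in> N \<Longrightarrow> v \<in> words d \<Longrightarrow> sect \<Phi> m v \<in> N"
    using N_sub_contracting[of "\<lambda>m. \<forall>v\<in>words d. sect \<Phi> m v \<in> N"] by blast
qed

text \<open>Closure under inverses uses g|_v = (g^-1|_(v g))^-1.\<close>

lemma N_inv: "m \<in> N \<Longrightarrow> inv\<^bsub>K\<^esub> m \<in> N"
proof -
  have "sections_eventually_in d \<Phi> {m \<in> N. inv\<^bsub>K\<^esub> m \<in> N} g" if g: "g \<in> carrier K" for g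
  proof -
    have gi: "inv\<^bsub>K\<^esub> g \<in> carrier K" using g by simp
    have "\<exists>k. \<forall>i\<in>{g, inv\<^bsub>K\<^esub> g}. \<forall>v\<in>words d. k \<le> length v \<longrightarrow> sect \<Phi> (id i) v \<in> N"
      by (rule sections_eventually_in_uniform) (use N_contr g gi in auto)
    then obtain k where k: "\<forall>v\<in>words d. k \<le> length v \<longrightarrow> sect \<Phi> g v \<in> N \<and> sect \<Phi> (inv\<^bsub>K\<^esub> g) v \<in> N"
      by auto
    have "sect \<Phi> g v \<in> {m \<in> N. inv\<^bsub>K\<^esub> m \<in> N}" if v: "v \<in> words d" "k \<le> length v" for v
    proof -
      have "act \<Phi> g v \<in> words d" "length (act \<Phi> g v) = length v"
        using g v(1) by (induction v arbitrary: g) (auto simp: act_words snd_less fst_car)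
      then have "sect \<Phi> (inv\<^bsub>K\<^esub> g) (act \<Phi> g v) \<in> N" using k v by auto
      moreover have "inv\<^bsub>K\<^esub> sect \<Phi> g v = sect \<Phi> (inv\<^bsub>K\<^esub> g) (act \<Phi> g v)"
        using sect_inv[OF g v(1)] sect_car[OF gi \<open>act \<Phi> g v \<in> words d\<close>] by simp
      ultimately show ?thesis using k v by auto
    qed
    then show ?thesis by (auto simp: sections_eventually_in_def)
  qed
  then show "m \<in> N \<Longrightarrow> inv\<^bsub>K\<^esub> m \<in> N"
    using N_sub_contracting[of "\<lambda>m. inv\<^bsub>K\<^esub> m \<in> N"] by blast
qed

lemma N_ancestor: "m \<in> N \<Longrightarrow> \<exists>m'\<in>N. \<exists>v\<in>words d. length v = L \<and> sect \<Phi> m' v = m"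
proof -
  have "sections_eventually_in d \<Phi> {m \<in> N. \<exists>m'\<in>N. \<exists>v\<in>words d. length v = L \<and> sect \<Phi> m' v = m} g"
    if g: "g \<in> carrier K" for g
  proof -
    obtain k where k: "\<forall>v\<in>words d. k \<le> length v \<longrightarrow> sect \<Phi> g v \<in> N"
      using N_contr[OF g] by (auto simp: sections_eventually_in_def)
    have "sect \<Phi> g v \<in> {m \<in> N. \<exists>m'\<in>N. \<exists>v\<in>words d. length v = L \<and> sect \<Phi> m' v = m}"
      if v: "v \<in> words d" "k + L \<le> length v" for v
    proof -
      define v1 where "v1 = take (length v - L) v"
      define v2 where "v2 = drop (length v - L) v"
      have vv: "v = v1 @ v2" by (simp add: v1_def v2_def)
      have w: "v1 \<in> words d" "v2 \<in> words d" using v(1) vv by (metis words_append)+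
      have "length v2 = L" "k \<le> length v1" using v(2) by (auto simp: v1_def v2_def)
      moreover have "sect \<Phi> g v = sect \<Phi> (sect \<Phi> g v1) v2" by (simp add: vv sect_append)
      ultimately show ?thesis using k v w by auto
    qed
    then show ?thesis unfolding sections_eventually_in_def by blast
  qed
  then show "m \<in> N \<Longrightarrow> ?thesis"
    using N_sub_contracting[of "\<lambda>m. \<exists>m'\<in>N. \<exists>v\<in>words d. length v = L \<and> sect \<Phi> m' v = m"] by blast
qed

end

section \<open>The universal contracting cover\<close>

locale universal_cover = ssg_nucleus G d \<Phi> N
  for G :: "('a,'b) monoid_scheme" and d \<Phi> N +
  fixes n :: "nat \<Rightarrow> 'a" and l :: nat
  assumes enum: "bij_betw n {0..<l} N"
begin

abbreviation "U \<equiv> G0un G n l"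
abbreviation "RR \<equiv> un_relators G n l"
abbreviation "s \<equiv> s_un G n l"
abbreviation "phu \<equiv> phi_un G d \<Phi> n l"
abbreviation "piu \<equiv> pi_un G n"
abbreviation "nx \<equiv> nidx \<Phi> n l"

interpretation G: group G by (rule grp)

lemma n_N: "i < l \<Longrightarrow> n i \<in> N" using enum by (auto simp: bij_betw_def)
lemma n_car: "i < l \<Longrightarrow> n i \<in> carrier G" using n_N N_sub by auto
lemma n_inj: "i < l \<Longrightarrow> j < l \<Longrightarrow> n i = n j \<Longrightarrow> i = j"
  using enum by (auto simp: bij_betw_def inj_on_def)
lemma N_index: "m \<in> N \<Longrightarrow> \<exists>i<l. n i = m"
  using enum by (auto simp: bij_betw_def)

text \<open>Since N is closed under sections, nidx picks the index of n_i|_x.\<close>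

lemma nidx: assumes "i < l" "x < d" shows "nx i x < l \<and> n (nx i x) = fst (\<Phi> (n i)) x"
proof -
  have "fst (\<Phi> (n i)) x = sect \<Phi> (n i) [x]" by simp
  also have "\<dots> \<in> N" using assms by (intro N_sect n_N) auto
  finally obtain j where j: "j < l" "n j = fst (\<Phi> (n i)) x" using N_index by blast
  have "\<exists>!j. j < l \<and> n j = fst (\<Phi> (n i)) x" using j n_inj by metis
  then show ?thesis unfolding nidx_def by (rule theI')
qed

lemma U_pres: "U = presented_group l RR" by (simp add: G0un_def)
lemma s_pres: "s i = pres_gen l RR i" by (simp add: s_un_def)

lemma U_group: "group U" by (simp add: U_pres presented_group_is_group)
interpretation U: group U by (rule U_group)

lemma s_car: "i < l \<Longrightarrow> s i \<in> carrier U" by (simp add: U_pres s_pres pres_gen_carrier)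

lemma U_word: "a \<in> carrier U \<Longrightarrow> \<exists>w. valid_word l w \<and> a = word_eval U s w"
  using pres_carrier_word[of a l RR] by (simp add: U_pres s_pres[abs_def])

lemma class2: "i < l \<Longrightarrow> j < l \<Longrightarrow> pres_class l RR [(i,True),(j,True)] = s i \<otimes>\<^bsub>U\<^esub> s j"
  using pres_mult_class[of l "[(i,True)]" "[(j,True)]" RR]
  by (simp add: U_pres s_pres pres_gen_def)

lemma class3: "i < l \<Longrightarrow> j < l \<Longrightarrow> k < l \<Longrightarrow>
   pres_class l RR [(i,True),(j,True),(k,True)] = s i \<otimes>\<^bsub>U\<^esub> (s j \<otimes>\<^bsub>U\<^esub> s k)"
  using pres_mult_class[of l "[(i,True)]" "[(j,True),(k,True)]" RR] class2[of j k]
  by (simp add: U_pres s_pres pres_gen_def)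

lemma rel1: "i < l \<Longrightarrow> n i = \<one>\<^bsub>G\<^esub> \<Longrightarrow> s i = \<one>\<^bsub>U\<^esub>"
  using pres_rel_one[of "[(i,True)]" RR l]
  by (auto simp: U_pres s_pres pres_gen_def valid_word_def un_relators_def)

lemma rel2: "i < l \<Longrightarrow> j < l \<Longrightarrow> n i \<otimes>\<^bsub>G\<^esub> n j = \<one>\<^bsub>G\<^esub> \<Longrightarrow> s i \<otimes>\<^bsub>U\<^esub> s j = \<one>\<^bsub>U\<^esub>"
  using pres_rel_one[of "[(i,True),(j,True)]" RR l] class2[of i j]
  by (auto simp: U_pres valid_word_def un_relators_def)

lemma rel3: "i < l \<Longrightarrow> j < l \<Longrightarrow> k < l \<Longrightarrow> n i \<otimes>\<^bsub>G\<^esub> n j \<otimes>\<^bsub>G\<^esub> n k = \<one>\<^bsub>G\<^esub> \<Longrightarrow>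
    s i \<otimes>\<^bsub>U\<^esub> (s j \<otimes>\<^bsub>U\<^esub> s k) = \<one>\<^bsub>U\<^esub>"
  using pres_rel_one[of "[(i,True),(j,True),(k,True)]" RR l] class3[of i j k]
  by (auto simp: U_pres valid_word_def un_relators_def)

lemma relator_cases:
  assumes "r \<in> RR"
  obtains i where "i < l" "n i = \<one>\<^bsub>G\<^esub>" "r = [(i,True)]"
  | i j where "i < l" "j < l" "n i \<otimes>\<^bsub>G\<^esub> n j = \<one>\<^bsub>G\<^esub>" "r = [(i,True),(j,True)]"
  | i j k where "i < l" "j < l" "k < l" "n i \<otimes>\<^bsub>G\<^esub> n j \<otimes>\<^bsub>G\<^esub> n k = \<one>\<^bsub>G\<^esub>"
      "r = [(i,True),(j,True),(k,True)]"
  using assms unfolding un_relators_def by blast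

lemma piu_assignment: "pres_assignment G l RR n"
proof
  show "\<And>r. r \<in> RR \<Longrightarrow> valid_word l r \<Longrightarrow> word_eval G n r = \<one>\<^bsub>G\<^esub>"
    by (erule relator_cases) (auto simp: n_car G.m_assoc)
qed (auto simp: grp n_car)

lemma piu_hom: "piu \<in> hom U G"
  unfolding pi_un_def U_pres by (rule pres_assignment.pres_map_hom[OF piu_assignment])

lemma piu_group_hom: "group_hom U G piu"
  using U_group grp piu_hom by (rule hom_group_hom)

lemma piu_s: "i < l \<Longrightarrow> piu (s i) = n i"
  unfolding pi_un_def s_pres by (rule pres_assignment.pres_map_gen[OF piu_assignment])

definition F :: "nat \<Rightarrow> (nat \<Rightarrow> gword set) \<times> (nat \<Rightarrow> nat)" where
  "F i = ((\<lambda>x\<in>{0..<d}. s (nx i x)), snd (\<Phi> (n i)))"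

lemma F_fst: "i < l \<Longrightarrow> x < d \<Longrightarrow> fst (F i) x = s (nx i x)" by (simp add: F_def)
lemma F_snd: "snd (F i) = snd (\<Phi> (n i))" by (simp add: F_def)

lemma F_car: "i < l \<Longrightarrow> F i \<in> carrier (wreath U d)"
  using nidx s_car snd_perm n_car by (auto simp: F_def wreath_carrier)

interpretation WU: group "wreath U d" by (rule wreath_group[OF U_group])

text \<open>The relators are killed by F: the coordinates of a product of F's are products of
  generators whose images in G are the coordinates of the corresponding (trivial) product of
  nucleus elements; as these products have length at most 3, they are relators again.\<close>

lemma F_rel1:
  assumes i: "i < l" "n i = \<one>\<^bsub>G\<^esub>"
  shows "F i = \<one>\<^bsub>wreath U d\<^esub>"
proof (rule wreath_eq_one[OF F_car[OF i(1)]])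
  fix x assume x: "x < d"
  have "n (nx i x) = \<one>\<^bsub>G\<^esub>" using nidx[OF i(1) x] i x by (simp add: fst_one)
  then show "fst (F i) x = \<one>\<^bsub>U\<^esub>" using F_fst[OF i(1) x] rel1 nidx[OF i(1) x] by simp
qed (use i in \<open>simp add: F_snd snd_one\<close>)

lemma F_rel2:
  assumes ij: "i < l" "j < l" "n i \<otimes>\<^bsub>G\<^esub> n j = \<one>\<^bsub>G\<^esub>"
  shows "F i \<otimes>\<^bsub>wreath U d\<^esub> F j = \<one>\<^bsub>wreath U d\<^esub>"
proof (rule wreath_eq_one)
  fix x assume x: "x < d"
  define y where "y = snd (\<Phi> (n i)) x"
  have y: "y < d" using snd_less n_car ij x by (simp add: y_def)
  have "\<one>\<^bsub>G\<^esub> = fst (\<Phi> (n i)) x \<otimes>\<^bsub>G\<^esub> fst (\<Phi> (n j)) y"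
    using fst_mult[OF n_car[OF ij(1)] n_car[OF ij(2)] x] ij(3) x by (simp add: fst_one y_def)
  then have "n (nx i x) \<otimes>\<^bsub>G\<^esub> n (nx j y) = \<one>\<^bsub>G\<^esub>"
    using nidx[OF ij(1) x] nidx[OF ij(2) y] by simp
  then have "s (nx i x) \<otimes>\<^bsub>U\<^esub> s (nx j y) = \<one>\<^bsub>U\<^esub>"
    using rel2 nidx[OF ij(1) x] nidx[OF ij(2) y] by blast
  then show "fst (F i \<otimes>\<^bsub>wreath U d\<^esub> F j) x = \<one>\<^bsub>U\<^esub>"
    using x y ij by (simp add: wreath_mult_fst F_fst F_snd y_def)
next
  have "snd (\<Phi> (n j)) \<circ> snd (\<Phi> (n i)) = id"
    using snd_mult[OF n_car[OF ij(1)] n_car[OF ij(2)]] ij(3) by (simp add: snd_one)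
  then show "snd (F i \<otimes>\<^bsub>wreath U d\<^esub> F j) = id" by (simp add: wreath_mult_snd F_snd)
qed (use F_car ij in simp)

lemma F_rel3:
  assumes ijk: "i < l" "j < l" "k < l" "n i \<otimes>\<^bsub>G\<^esub> n j \<otimes>\<^bsub>G\<^esub> n k = \<one>\<^bsub>G\<^esub>"
  shows "F i \<otimes>\<^bsub>wreath U d\<^esub> (F j \<otimes>\<^bsub>wreath U d\<^esub> F k) = \<one>\<^bsub>wreath U d\<^esub>"
proof (rule wreath_eq_one)
  have nij: "n i \<otimes>\<^bsub>G\<^esub> n j \<in> carrier G" using n_car ijk by simp
  fix x assume x: "x < d"
  define y where "y = snd (\<Phi> (n i)) x"
  define z where "z = snd (\<Phi> (n j)) y"
  have y: "y < d" and z: "z < d" using snd_less n_car ijk x by (simp_all add: y_def z_def)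
  have "\<one>\<^bsub>G\<^esub> = fst (\<Phi> (n i \<otimes>\<^bsub>G\<^esub> n j)) x \<otimes>\<^bsub>G\<^esub> fst (\<Phi> (n k)) (snd (\<Phi> (n i \<otimes>\<^bsub>G\<^esub> n j)) x)"
    using fst_mult[OF nij n_car[OF ijk(3)] x] ijk(4) x by (simp add: fst_one)
  also have "\<dots> = fst (\<Phi> (n i)) x \<otimes>\<^bsub>G\<^esub> fst (\<Phi> (n j)) y \<otimes>\<^bsub>G\<^esub> fst (\<Phi> (n k)) z"
    using ijk x by (simp add: fst_mult snd_mult n_car y_def z_def)
  finally have "n (nx i x) \<otimes>\<^bsub>G\<^esub> n (nx j y) \<otimes>\<^bsub>G\<^esub> n (nx k z) = \<one>\<^bsub>G\<^esub>"
    using nidx[OF ijk(1) x] nidx[OF ijk(2) y] nidx[OF ijk(3) z] by simp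
  then have "s (nx i x) \<otimes>\<^bsub>U\<^esub> (s (nx j y) \<otimes>\<^bsub>U\<^esub> s (nx k z)) = \<one>\<^bsub>U\<^esub>"
    using rel3 nidx[OF ijk(1) x] nidx[OF ijk(2) y] nidx[OF ijk(3) z] by blast
  then show "fst (F i \<otimes>\<^bsub>wreath U d\<^esub> (F j \<otimes>\<^bsub>wreath U d\<^esub> F k)) x = \<one>\<^bsub>U\<^esub>"
    using x y z ijk by (simp add: wreath_mult_fst wreath_mult_snd F_fst F_snd y_def z_def)
next
  have "snd (\<Phi> (n i \<otimes>\<^bsub>G\<^esub> n j \<otimes>\<^bsub>G\<^esub> n k)) = id" using ijk by (simp add: snd_one)
  then have "snd (\<Phi> (n k)) \<circ> (snd (\<Phi> (n j)) \<circ> snd (\<Phi> (n i))) = id"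
    using snd_mult[OF G.m_closed[OF n_car[OF ijk(1)] n_car[OF ijk(2)]] n_car[OF ijk(3)]]
      snd_mult[OF n_car[OF ijk(1)] n_car[OF ijk(2)]] by simp
  then show "snd (F i \<otimes>\<^bsub>wreath U d\<^esub> (F j \<otimes>\<^bsub>wreath U d\<^esub> F k)) = id"
    by (simp add: wreath_mult_snd F_snd o_assoc)
qed (use F_car ijk in simp)

lemma phu_assignment: "pres_assignment (wreath U d) l RR F"
proof
  fix r assume "r \<in> RR" "valid_word l r"
  then show "word_eval (wreath U d) F r = \<one>\<^bsub>wreath U d\<^esub>"
    by (elim relator_cases) (use F_car F_rel1 F_rel2 F_rel3 WU.m_assoc in auto)
qed (auto simp: F_car wreath_group[OF U_group])

lemma phu_eq: "phu = pres_map (wreath U d) F"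
  unfolding phi_un_def F_def[abs_def] by simp

lemma phu_hom: "phu \<in> hom U (wreath U d)"
  unfolding phu_eq using pres_assignment.pres_map_hom[OF phu_assignment] by (simp add: U_pres)

lemma phu_s: "i < l \<Longrightarrow> phu (s i) = F i"
  unfolding phu_eq s_pres by (rule pres_assignment.pres_map_gen[OF phu_assignment])

lemma U_ssg: "ssg U d phu" by (intro ssg.intro U_group phu_hom)

text \<open>phi_un lifts Phi: both hat(pi_un) o phi_un and Phi o pi_un are homomorphisms
  U \<rightarrow> G wr S_d agreeing on the generators.\<close>

lemma phu_lifts_Phi: "a \<in> carrier U \<Longrightarrow> wr_map d piu (phu a) = \<Phi> (piu a)"
proof -
  assume a: "a \<in> carrier U"
  have F_image: "wr_map d piu (F i) = \<Phi> (n i)" if i: "i < l" for i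
  proof -
    have "fst (wr_map d piu (F i)) x = fst (\<Phi> (n i)) x" for x
    proof (cases "x < d")
      case True
      then show ?thesis using nidx[OF i True] piu_s by (simp add: wr_map_fst F_fst i)
    next
      case False
      then show ?thesis using fst_ext[OF n_car[OF i]]
        by (cases "F i") (auto simp: wr_map_def extensional_def)
    qed
    then show ?thesis by (simp add: prod_eq_iff fun_eq_iff wr_map_snd F_snd)
  qed
  have gen: "wr_map d piu (phu (pres_gen l RR i)) = \<Phi> (piu (pres_gen l RR i))" if "i < l" for i
    using F_image phu_s piu_s that by (simp add: s_pres)
  have hom1: "(\<lambda>a. wr_map d piu (phu a)) \<in> hom (presented_group l RR) (wreath G d)"
    using hom_comp[OF phu_hom wr_map_hom[OF piu_hom]] by (simp add: U_pres)
  have hom2: "(\<lambda>a. \<Phi> (piu a)) \<in> hom (presented_group l RR) (wreath G d)"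
    using hom_comp[OF piu_hom Phi_hom] by (simp add: U_pres)
  show ?thesis
    using pres_hom_eq[OF wreath_group[OF grp] hom1 hom2 gen] a by (simp add: U_pres)
qed

lemma sect_piu: "a \<in> carrier U \<Longrightarrow> v \<in> words d \<Longrightarrow> piu (sect phu a v) = sect \<Phi> (piu a) v"
  using sect_semiconj[OF U_ssg phu_lifts_Phi] .

lemma sect_s: "i < l \<Longrightarrow> v \<in> words d \<Longrightarrow> \<exists>m<l. sect phu (s i) v = s m"
proof (induction v arbitrary: i)
  case (Cons x w)
  have "fst (phu (s i)) x = s (nx i x)" using Cons.prems by (simp add: phu_s F_fst)
  then show ?case using Cons nidx by simp
qed auto

lemma sect_s_index: "i < l \<Longrightarrow> v \<in> words d \<Longrightarrow> sect phu (s i) v = s m \<Longrightarrow> m < l \<Longrightarrow>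
    n m = sect \<Phi> (n i) v"
  using sect_piu[OF s_car] piu_s by metis

end

section \<open>Normal closures and maps through quotients\<close>

context group
begin

lemma normal_closure_normal:
  assumes "E \<subseteq> carrier G"
  shows "normal_closure G E \<lhd> G"
  unfolding normal_closure_def
proof (rule normal_generateI)
  show "(\<Union>g\<in>carrier G. (\<lambda>e. g \<otimes> e \<otimes> inv g) ` E) \<subseteq> carrier G"
    using assms by auto
next
  fix x g assume x: "x \<in> (\<Union>g\<in>carrier G. (\<lambda>e. g \<otimes> e \<otimes> inv g) ` E)" and g: "g \<in> carrier G"
  then obtain g' e where ge: "g' \<in> carrier G" "e \<in> E" "x = g' \<otimes> e \<otimes> inv g'" by auto
  have "g \<otimes> x \<otimes> inv g = (g \<otimes> g') \<otimes> e \<otimes> inv (g \<otimes> g')"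
    using ge g assms by (auto simp: m_assoc inv_mult_group)
  then show "g \<otimes> x \<otimes> inv g \<in> (\<Union>g\<in>carrier G. (\<lambda>e. g \<otimes> e \<otimes> inv g) ` E)"
    using ge g by auto
qed

lemma normal_closure_incl:
  assumes "E \<subseteq> carrier G"
  shows "E \<subseteq> normal_closure G E"
proof
  fix e assume e: "e \<in> E"
  then have "e = \<one> \<otimes> e \<otimes> inv \<one>" using assms by auto
  then show "e \<in> normal_closure G E"
    unfolding normal_closure_def using e by (blast intro: generate.incl)
qed

lemma normal_closure_least:
  assumes "Y \<lhd> G" "E \<subseteq> Y"
  shows "normal_closure G E \<subseteq> Y"
  unfolding normal_closure_def
proof (rule generate_subgroup_incl)
  show "subgroup Y G" using assms(1) by (simp add: normal_def)
  show "(\<Union>g\<in>carrier G. (\<lambda>e. g \<otimes> e \<otimes> inv g) ` E) \<subseteq> Y"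
    using assms normal_inv_iff by blast
qed

text \<open>A homomorphism whose kernel contains H is constant on the cosets of H; so it can be
  evaluated on an arbitrary representative.\<close>

lemma hom_const_on_coset:
  assumes f: "group_hom G K f" and ker: "H \<subseteq> kernel G K f"
    and a: "a \<in> carrier G" and b: "b \<in> H #> a"
  shows "f b = f a"
proof -
  obtain x where x: "x \<in> H" "b = x \<otimes> a" using b by (auto simp: r_coset_def)
  have "f x = \<one>\<^bsub>K\<^esub>" "x \<in> carrier G" using x ker by (auto simp: kernel_def)
  then show ?thesis using x a group_hom.hom_mult[OF f] group_hom.hom_closed[OF f] f
    by (simp add: group_hom_def group.is_monoid monoid.l_one)
qed

lemma hom_some_coset:
  assumes "group_hom G K f" "H \<subseteq> kernel G K f" "subgroup H G" "a \<in> carrier G"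
  shows "f (SOME b. b \<in> H #> a) = f a"
  using hom_const_on_coset[OF assms(1,2,4)] rcos_self[OF assms(4,3)] by (metis someI)

end

section \<open>The standard contracting cover\<close>

locale standard_cover = universal_cover +
  fixes h :: "nat \<Rightarrow> nat \<Rightarrow> gword set"
  assumes h_car: "\<And>x i. x < d \<Longrightarrow> i < l \<Longrightarrow> h x i \<in> carrier U"
    and h_fix: "\<And>x i. x < d \<Longrightarrow> i < l \<Longrightarrow> snd (\<Phi> (piu (h x i))) x = x"
    and h_sec: "\<And>x i. x < d \<Longrightarrow> i < l \<Longrightarrow> fst (\<Phi> (piu (h x i))) x = n i"
begin

abbreviation "E \<equiv> E_set G d \<Phi> n l h"
abbreviation "H \<equiv> H_std G d \<Phi> n l h"
abbreviation "Q \<equiv> G0_std G d \<Phi> n l h"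
abbreviation "phi1 \<equiv> phi_1 G d \<Phi> n l h"
abbreviation proj where "proj a \<equiv> H #>\<^bsub>U\<^esub> a"

interpretation G: group G by (rule grp)
interpretation U: group U by (rule U_group)

definition w_elem :: "nat \<Rightarrow> nat \<Rightarrow> gword set" where
  "w_elem x i = sect phu (h x i) [x] \<otimes>\<^bsub>U\<^esub> inv\<^bsub>U\<^esub> (s i)"

lemma w_elem_car: assumes "x < d" "i < l" shows "w_elem x i \<in> carrier U"
  using ssg.fst_car[OF U_ssg h_car[OF assms] assms(1)] s_car[OF assms(2)] by (simp add: w_elem_def)

lemma E_eq: "E = {sect phu (w_elem x i) v | x i v. x < d \<and> i < l \<and> v \<in> words d}"
  by (simp add: E_set_def w_elem_def)

lemma E_car: "E \<subseteq> carrier U"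
  using ssg.sect_car[OF U_ssg] w_elem_car by (auto simp: E_eq)

lemma w_elem_in_E: "x < d \<Longrightarrow> i < l \<Longrightarrow> w_elem x i \<in> E"
  unfolding E_eq by (intro CollectI exI[of _ x] exI[of _ i] exI[of _ "[]"]) simp

text \<open>w(x, n_i) lies over n_i n_i^-1 = 1, hence so does all of E.\<close>

lemma w_elem_piu: "x < d \<Longrightarrow> i < l \<Longrightarrow> piu (w_elem x i) = \<one>\<^bsub>G\<^esub>"
proof -
  assume x: "x < d" and i: "i < l"
  have sc: "sect phu (h x i) [x] \<in> carrier U" using ssg.fst_car[OF U_ssg h_car[OF x i] x] by simp
  have "piu (w_elem x i) = piu (sect phu (h x i) [x]) \<otimes>\<^bsub>G\<^esub> inv\<^bsub>G\<^esub> (piu (s i))"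
    unfolding w_elem_def using sc s_car[OF i]
    by (simp add: group_hom.hom_mult[OF piu_group_hom] group_hom.hom_inv[OF piu_group_hom])
  also have "\<dots> = n i \<otimes>\<^bsub>G\<^esub> inv\<^bsub>G\<^esub> (n i)"
    using sect_piu[OF h_car[OF x i], of "[x]"] x h_sec[OF x i] piu_s[OF i] by simp
  finally show ?thesis using n_car[OF i] by simp
qed

lemma E_piu: "e \<in> E \<Longrightarrow> piu e = \<one>\<^bsub>G\<^esub>"
  using sect_piu w_elem_car w_elem_piu sect_one by (auto simp: E_eq)

lemma E_sect: "e \<in> E \<Longrightarrow> y < d \<Longrightarrow> fst (phu e) y \<in> E"
proof -
  assume e: "e \<in> E" and y: "y < d"
  then obtain x i v where xiv: "x < d" "i < l" "v \<in> words d" "e = sect phu (w_elem x i) v"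
    by (auto simp: E_eq)
  have "fst (phu e) y = sect phu (w_elem x i) (v @ [y])" using xiv by (simp add: sect_append)
  moreover have "v @ [y] \<in> words d" using xiv y by simp
  ultimately show ?thesis using xiv unfolding E_eq by blast
qed

lemma E_snd: "e \<in> E \<Longrightarrow> snd (phu e) = id"
proof -
  assume e: "e \<in> E"
  have "snd (phu e) = snd (wr_map d piu (phu e))" by (simp add: wr_map_snd)
  also have "\<dots> = snd (\<Phi> (piu e))" using phu_lifts_Phi e E_car by auto
  finally show ?thesis using E_piu[OF e] snd_one by simp
qed

lemma H_closure: "normal_closure U E = H" by (simp add: H_std_def)

lemma H_normal: "H \<lhd> U"
  unfolding H_std_def using E_car by (rule U.normal_closure_normal)

lemma H_subgroup: "subgroup H U" using H_normal by (simp add: normal_def)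

lemma E_H: "E \<subseteq> H"
  unfolding H_std_def using E_car by (rule U.normal_closure_incl)

lemma Q_quot: "Q = U Mod H" by (simp add: G0_std_def)
lemma Q_group: "group Q" unfolding Q_quot using H_normal by (rule normal.factorgroup_is_group)
interpretation Q: group Q by (rule Q_group)

lemma Q_one: "\<one>\<^bsub>Q\<^esub> = H" by (simp add: Q_quot FactGroup_def)
lemma proj_hom: "(\<lambda>a. proj a) \<in> hom U Q"
  unfolding Q_quot using H_normal by (rule normal.r_coset_hom_Mod)
lemma proj_car: "a \<in> carrier U \<Longrightarrow> proj a \<in> carrier Q"
  using proj_hom by (auto simp: hom_def)
lemma proj_mult: "a \<in> carrier U \<Longrightarrow> b \<in> carrier U \<Longrightarrow> proj (a \<otimes>\<^bsub>U\<^esub> b) = proj a \<otimes>\<^bsub>Q\<^esub> proj b"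
  using proj_hom by (auto simp: hom_def)
lemma Q_cases: "C \<in> carrier Q \<Longrightarrow> \<exists>a\<in>carrier U. C = proj a"
  by (auto simp: Q_quot FactGroup_def RCOSETS_def)
lemma proj_H: "a \<in> H \<Longrightarrow> proj a = \<one>\<^bsub>Q\<^esub>"
  using subgroup.rcos_const[OF H_subgroup U_group] Q_one by simp

abbreviation "phq a \<equiv> wr_map d (\<lambda>a. proj a) (phu a)"

lemma phq_hom: "(\<lambda>a. phq a) \<in> hom U (wreath Q d)"
  by (rule hom_comp[OF phu_hom wr_map_hom[OF proj_hom]])

lemma phq_car: "a \<in> carrier U \<Longrightarrow> phq a \<in> carrier (wreath Q d)"
  using phq_hom by (auto simp: hom_def)

lemma phq_E: "e \<in> E \<Longrightarrow> phq e = \<one>\<^bsub>wreath Q d\<^esub>"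
proof (rule wreath_eq_one)
  assume e: "e \<in> E"
  then show "phq e \<in> carrier (wreath Q d)" using phq_car E_car by auto
  show "fst (phq e) x = \<one>\<^bsub>Q\<^esub>" if "x < d" for x
    using E_sect[OF e that] E_H proj_H that by (auto simp: wr_map_fst)
  show "snd (phq e) = id" using E_snd[OF e] by (simp add: wr_map_snd)
qed

text \<open>H lies in the kernels of pi_un and of phq, as both kill E.\<close>

lemma H_ker_piu: "H \<subseteq> kernel U G piu"
  unfolding H_std_def
  using E_piu E_car by (intro U.normal_closure_least group_hom.normal_kernel[OF piu_group_hom])
    (auto simp: kernel_def)

lemma H_ker_phq: "H \<subseteq> kernel U (wreath Q d) (\<lambda>a. phq a)"
proof -
  have "normal_closure U E \<subseteq> kernel U (wreath Q d) (\<lambda>a. phq a)"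
    using phq_E phq_car E_car
    by (intro U.normal_closure_least group_hom.normal_kernel
        hom_group_hom[OF U_group wreath_group[OF Q_group] phq_hom]) (auto simp: kernel_def)
  then show ?thesis by (simp only: H_closure)
qed

lemma phi1_proj: "a \<in> carrier U \<Longrightarrow> phi1 (proj a) = phq a"
  unfolding phi_1_def quot_wr_def wr_map_def[symmetric]
  using U.hom_some_coset[OF hom_group_hom[OF U_group wreath_group[OF Q_group] phq_hom]
      H_ker_phq H_subgroup] by blast

lemma pi_std_proj: "a \<in> carrier U \<Longrightarrow> pi_std G n (proj a) = piu a"
  unfolding pi_std_def using U.hom_some_coset[OF piu_group_hom H_ker_piu H_subgroup] .

lemma phi1_hom: "phi1 \<in> hom Q (wreath Q d)"
proof (rule homI)
  fix C assume "C \<in> carrier Q"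
  then obtain a where "a \<in> carrier U" "C = proj a" using Q_cases by blast
  then show "phi1 C \<in> carrier (wreath Q d)" using phi1_proj phq_car by simp
next
  fix C D assume "C \<in> carrier Q" "D \<in> carrier Q"
  then obtain a b where ab: "a \<in> carrier U" "C = proj a" "b \<in> carrier U" "D = proj b"
    using Q_cases by metis
  then have "C \<otimes>\<^bsub>Q\<^esub> D = proj (a \<otimes>\<^bsub>U\<^esub> b)" using proj_mult by simp
  then show "phi1 (C \<otimes>\<^bsub>Q\<^esub> D) = phi1 C \<otimes>\<^bsub>wreath Q d\<^esub> phi1 D"
    using ab phi1_proj phq_hom by (simp add: hom_def)
qed

lemma Q_ssg: "ssg Q d phi1" by (intro ssg.intro Q_group phi1_hom)

lemma phi1_quot_wr: "a \<in> carrier U \<Longrightarrow> phi1 (proj a) = quot_wr G d \<Phi> n l h (phu a)"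
  using phi1_proj by (simp add: quot_wr_def wr_map_def)

text \<open>hat(pi) o phi_1 = Phi o pi, inherited from the corresponding identity for phi_un.\<close>

lemma phi1_lifts_Phi: "C \<in> carrier Q \<Longrightarrow> wr_map d (pi_std G n) (phi1 C) = \<Phi> (pi_std G n C)"
proof -
  assume "C \<in> carrier Q"
  then obtain a where a: "a \<in> carrier U" "C = proj a" using Q_cases by blast
  have "fst (wr_map d (pi_std G n) (phq a)) = fst (wr_map d piu (phu a))"
    using ssg.fst_car[OF U_ssg a(1)] pi_std_proj
    by (auto simp: fun_eq_iff wr_map_fst wr_map_def split: prod.splits)
  then have "wr_map d (pi_std G n) (phq a) = wr_map d piu (phu a)"
    by (simp add: prod_eq_iff wr_map_snd)
  then show ?thesis using a phi1_proj pi_std_proj phu_lifts_Phi by simp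
qed

lemma sect_proj: "a \<in> carrier U \<Longrightarrow> v \<in> words d \<Longrightarrow> proj (sect phu a v) = sect phi1 (proj a) v"
  using sect_semiconj[OF U_ssg, of "\<lambda>a. proj a" phi1] phi1_proj by simp

end

context universal_cover
begin

interpretation G: group G by (rule grp)
interpretation U: group U by (rule U_group)

text \<open>The generating set {s_i} contains 1, is closed under inverses, and contains s_a s_b
  whenever n_a n_b is in N; all three follow from the relators and closure properties of N.\<close>

lemma one_s: "\<exists>j<l. s j = \<one>\<^bsub>U\<^esub>"
  using N_index[OF one_in_N] rel1 by blast

lemma inv_s: "i < l \<Longrightarrow> \<exists>j<l. inv\<^bsub>U\<^esub> (s i) = s j"
proof -
  assume i: "i < l"
  obtain j where j: "j < l" "n j = inv\<^bsub>G\<^esub> (n i)" using N_index[OF N_inv[OF n_N[OF i]]] by blast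
  have "n i \<otimes>\<^bsub>G\<^esub> n j = \<one>\<^bsub>G\<^esub>" using j n_car[OF i] by simp
  then have "s i \<otimes>\<^bsub>U\<^esub> s j = \<one>\<^bsub>U\<^esub>" using rel2 i j by blast
  then show ?thesis using U.inv_equality U.inv_comm s_car i j by metis
qed

lemma pair_s:
  assumes a: "a < l" and b: "b < l" and m: "m < l" and e: "n a \<otimes>\<^bsub>G\<^esub> n b = n m"
  shows "s a \<otimes>\<^bsub>U\<^esub> s b = s m"
proof -
  obtain c where c: "c < l" "n c = inv\<^bsub>G\<^esub> (n m)" using N_index[OF N_inv[OF n_N[OF m]]] by blast
  have "n a \<otimes>\<^bsub>G\<^esub> n b \<otimes>\<^bsub>G\<^esub> n c = \<one>\<^bsub>G\<^esub>" using e c n_car m by simp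
  then have 1: "s a \<otimes>\<^bsub>U\<^esub> (s b \<otimes>\<^bsub>U\<^esub> s c) = \<one>\<^bsub>U\<^esub>" using rel3 a b c by blast
  have "n c \<otimes>\<^bsub>G\<^esub> n m = \<one>\<^bsub>G\<^esub>" using c n_car m by simp
  then have 2: "s c \<otimes>\<^bsub>U\<^esub> s m = \<one>\<^bsub>U\<^esub>" using rel2 c m by blast
  have "s a \<otimes>\<^bsub>U\<^esub> s b = (s a \<otimes>\<^bsub>U\<^esub> s b) \<otimes>\<^bsub>U\<^esub> (s c \<otimes>\<^bsub>U\<^esub> s m)"
    using 2 s_car a b by simp
  also have "\<dots> = (s a \<otimes>\<^bsub>U\<^esub> (s b \<otimes>\<^bsub>U\<^esub> s c)) \<otimes>\<^bsub>U\<^esub> s m"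
    using s_car a b c m by (simp add: U.m_assoc)
  finally show ?thesis using 1 s_car m by simp
qed

text \<open>Products of generators s_(j1) ... s_(jk); by inv_s, every element of U is one.\<close>

definition prodl :: "nat list \<Rightarrow> gword set" where
  "prodl js = foldr (\<lambda>j acc. s j \<otimes>\<^bsub>U\<^esub> acc) js \<one>\<^bsub>U\<^esub>"

lemma prodl_simps [simp]: "prodl [] = \<one>\<^bsub>U\<^esub>" "prodl (j # js) = s j \<otimes>\<^bsub>U\<^esub> prodl js"
  by (simp_all add: prodl_def)

lemma prodl_car: "set js \<subseteq> {0..<l} \<Longrightarrow> prodl js \<in> carrier U"
  by (induction js) (auto simp: s_car)

lemma word_eval_prodl: "valid_word l w \<Longrightarrow> \<exists>js. set js \<subseteq> {0..<l} \<and> word_eval U s w = prodl js"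
proof (induction w)
  case (Cons x w)
  obtain i b where x: "x = (i,b)" by (cases x)
  have i: "i < l" and vw: "valid_word l w" using Cons.prems x by auto
  obtain js where js: "set js \<subseteq> {0..<l}" "word_eval U s w = prodl js" using Cons.IH vw by blast
  obtain j where j: "j < l" "(if b then s i else inv\<^bsub>U\<^esub> (s i)) = s j"
    using inv_s[OF i] i by (cases b) auto
  show ?case using js j x by (intro exI[of _ "j # js"]) simp
qed (auto intro: exI[of _ "[]"])

lemma U_prodl: "a \<in> carrier U \<Longrightarrow> \<exists>js. set js \<subseteq> {0..<l} \<and> a = prodl js"
  using U_word word_eval_prodl by metis

lemma sect_prodl:
  "set js \<subseteq> {0..<l} \<Longrightarrow> v \<in> words d \<Longrightarrow>
    \<exists>js'. length js' = length js \<and> set js' \<subseteq> {0..<l} \<and> sect phu (prodl js) v = prodl js'"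
proof (induction js arbitrary: v)
  case Nil then show ?case using ssg.sect_one[OF U_ssg] by (intro exI[of _ "[]"]) simp
next
  case (Cons j js)
  have j: "j < l" and js: "set js \<subseteq> {0..<l}" using Cons.prems by auto
  have av: "act phu (s j) v \<in> words d" using ssg.act_words[OF U_ssg s_car[OF j] Cons.prems(2)] .
  obtain m where m: "m < l" "sect phu (s j) v = s m" using sect_s[OF j Cons.prems(2)] by blast
  obtain js' where js': "length js' = length js" "set js' \<subseteq> {0..<l}"
      "sect phu (prodl js) (act phu (s j) v) = prodl js'"
    using Cons.IH[OF js av] by blast
  show ?case
    using ssg.sect_mult[OF U_ssg s_car[OF j] prodl_car[OF js] Cons.prems(2)] m js'
    by (intro exI[of _ "m # js'"]) simp
qed

abbreviation "S \<equiv> s ` {0..<l}"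

text \<open>The key consequence of contraction in G: the long sections of s_a s_b are sections
  s_a' s_b' lying over sections of n_a n_b, hence eventually over N, where pair_s turns
  them into single generators.\<close>

lemma pair_sections_eventually_in:
  assumes a: "a < l" and b: "b < l"
  shows "sections_eventually_in d phu S (s a \<otimes>\<^bsub>U\<^esub> s b)"
proof -
  have nab: "n a \<otimes>\<^bsub>G\<^esub> n b \<in> carrier G" using n_car a b by simp
  obtain k where k: "\<forall>v\<in>words d. k \<le> length v \<longrightarrow> sect \<Phi> (n a \<otimes>\<^bsub>G\<^esub> n b) v \<in> N"
    using N_contr[OF nab] by (auto simp: sections_eventually_in_def)
  have "sect phu (s a \<otimes>\<^bsub>U\<^esub> s b) v \<in> S" if v: "v \<in> words d" "k \<le> length v" for v
  proof -
    have "set [a,b] \<subseteq> {0..<l}" using a b by auto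
    then obtain js' where js': "length js' = length [a,b]" "set js' \<subseteq> {0..<l}"
        "sect phu (prodl [a,b]) v = prodl js'"
      using sect_prodl v(1) by blast
    then obtain a' b' where a'b': "js' = [a',b']" "a' < l" "b' < l"
      by (cases js'; cases "tl js'") auto
    have sab: "sect phu (s a \<otimes>\<^bsub>U\<^esub> s b) v = s a' \<otimes>\<^bsub>U\<^esub> s b'"
      using js' a'b' a b s_car by simp
    have "n a' \<otimes>\<^bsub>G\<^esub> n b' = piu (sect phu (s a \<otimes>\<^bsub>U\<^esub> s b) v)"
      using sab a'b' s_car piu_s by (simp add: group_hom.hom_mult[OF piu_group_hom])
    also have "\<dots> = sect \<Phi> (n a \<otimes>\<^bsub>G\<^esub> n b) v"
      using sect_piu[of "s a \<otimes>\<^bsub>U\<^esub> s b" v] s_car piu_s a b v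
      by (simp add: group_hom.hom_mult[OF piu_group_hom])
    finally have "n a' \<otimes>\<^bsub>G\<^esub> n b' \<in> N" using k v by simp
    then obtain m where m: "m < l" "n m = n a' \<otimes>\<^bsub>G\<^esub> n b'" using N_index by blast
    then show ?thesis using sab pair_s a'b' by auto
  qed
  then show ?thesis unfolding sections_eventually_in_def by blast
qed

text \<open>Along all words of one fixed length K0, the section of a product of at least two
  generators is a product of one generator fewer: the leading pair s_a s_b contributes a
  single generator, by a common threshold for the finitely many pairs.\<close>

lemma prodl_sect_shorter:
  assumes a: "a < l" and b: "b < l" and r: "set rest \<subseteq> {0..<l}"
  shows "\<exists>K0. \<forall>v\<in>words d. length v = K0 \<longrightarrow>
    (\<exists>js'. length js' = Suc (length rest) \<and> set js' \<subseteq> {0..<l} \<and>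
       sect phu (prodl (a # b # rest)) v = prodl js')"
proof -
  have sab: "s a \<otimes>\<^bsub>U\<^esub> s b \<in> carrier U" using s_car a b by simp
  obtain K0 where K0: "\<forall>p\<in>{0..<l} \<times> {0..<l}. \<forall>v\<in>words d.
      K0 \<le> length v \<longrightarrow> sect phu (s (fst p) \<otimes>\<^bsub>U\<^esub> s (snd p)) v \<in> S"
    using sections_eventually_in_uniform[of "{0..<l} \<times> {0..<l}" d phu S
        "\<lambda>p. s (fst p) \<otimes>\<^bsub>U\<^esub> s (snd p)"] pair_sections_eventually_in by auto
  have "\<exists>js'. length js' = Suc (length rest) \<and> set js' \<subseteq> {0..<l} \<and>
      sect phu (prodl (a # b # rest)) v = prodl js'" if v: "v \<in> words d" "length v = K0" for v
  proof -
    obtain m where m: "m < l" "sect phu (s a \<otimes>\<^bsub>U\<^esub> s b) v = s m" using K0 a b v by fastforce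
    obtain js' where js': "length js' = length rest" "set js' \<subseteq> {0..<l}"
        "sect phu (prodl rest) (act phu (s a \<otimes>\<^bsub>U\<^esub> s b) v) = prodl js'"
      using sect_prodl[OF r ssg.act_words[OF U_ssg sab v(1)]] by blast
    have "prodl (a # b # rest) = (s a \<otimes>\<^bsub>U\<^esub> s b) \<otimes>\<^bsub>U\<^esub> prodl rest"
      using a b r s_car prodl_car by (simp add: U.m_assoc)
    then have "sect phu (prodl (a # b # rest)) v = prodl (m # js')"
      using ssg.sect_mult[OF U_ssg sab prodl_car[OF r] v(1)] m js' by simp
    then show ?thesis using js' m by (intro exI[of _ "m # js'"]) auto
  qed
  then show ?thesis by blast
qed

lemma prodl_sections_eventually_in:
  "set js \<subseteq> {0..<l} \<Longrightarrow> sections_eventually_in d phu S (prodl js)"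
proof (induction "length js" arbitrary: js rule: less_induct)
  case less
  show ?case
  proof (cases js rule: remdups_adj.cases)
    case 1
    obtain j where "j < l" "s j = \<one>\<^bsub>U\<^esub>" using one_s by blast
    then show ?thesis using 1 ssg.sect_one[OF U_ssg]
      by (auto simp: sections_eventually_in_def intro!: exI[of _ 0] image_eqI[of _ s j])
  next
    case (2 a)
    then have a: "a < l" using less.prems by simp
    have "sect phu (prodl js) v \<in> S" if v: "v \<in> words d" for v
    proof -
      obtain m where "m < l" "sect phu (s a) v = s m" using sect_s[OF a v] by blast
      then show ?thesis using 2 a s_car by simp
    qed
    then show ?thesis by (auto simp: sections_eventually_in_def)
  next
    case (3 a b rest)
    then obtain K0 where K0: "\<forall>v\<in>words d. length v = K0 \<longrightarrow> (\<exists>js'. length js' = Suc (length rest) \<and>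
        set js' \<subseteq> {0..<l} \<and> sect phu (prodl js) v = prodl js')"
      using prodl_sect_shorter[of a b rest] less.prems by (auto simp del: prodl_simps)
    show ?thesis
    proof (rule sections_eventually_in_prefix[where L = K0])
      fix v assume "v \<in> words d" "length v = K0"
      then obtain js' where js': "length js' = Suc (length rest)" "set js' \<subseteq> {0..<l}"
          "sect phu (prodl js) v = prodl js'"
        using K0 by blast
      moreover have "length js' < length js" using js'(1) 3 by simp
      ultimately show "sections_eventually_in d phu S (sect phu (prodl js) v)"
        using less.hyps by metis
    qed
  qed
qed

lemma U_sections_eventually_in: "a \<in> carrier U \<Longrightarrow> sections_eventually_in d phu S a"
  using U_prodl prodl_sections_eventually_in by blast

end

context standard_cover
begin

interpretation U: group U by (rule U_group)
interpretation Q: group Q by (rule Q_group)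

text \<open>By construction of E, the coset of h(x,n_i) fixes x and has section H s_i at x, since
  h(x,n_i)|_x = w(x,n_i) s_i with w(x,n_i) in H.\<close>

lemma proj_s_stab_sections: "x < d \<Longrightarrow> i < l \<Longrightarrow> proj (s i) \<in> stab_sections Q phi1 x"
proof -
  assume x: "x < d" and i: "i < l"
  have hc: "h x i \<in> carrier U" using h_car x i by simp
  have "snd (phi1 (proj (h x i))) = snd (\<Phi> (piu (h x i)))"
    using phi1_proj phu_lifts_Phi[OF hc] hc by (metis wr_map_snd)
  then have fix_x: "snd (phi1 (proj (h x i))) x = x" using h_fix x i by simp
  have "sect phu (h x i) [x] = w_elem x i \<otimes>\<^bsub>U\<^esub> s i"
    using ssg.fst_car[OF U_ssg hc x] s_car[OF i] by (simp add: w_elem_def U.m_assoc)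
  then have "proj (sect phu (h x i) [x]) = proj (w_elem x i) \<otimes>\<^bsub>Q\<^esub> proj (s i)"
    using proj_mult w_elem_car s_car x i by simp
  also have "\<dots> = proj (s i)"
    using proj_H w_elem_in_E[OF x i] E_H proj_car[OF s_car[OF i]] by auto
  finally have "fst (phi1 (proj (h x i))) x = proj (s i)"
    using phi1_proj hc x by (simp add: wr_map_fst)
  then show ?thesis
    using fix_x proj_car hc s_car i by (auto simp: stab_sections_def)
qed

lemma Q_word: "C \<in> carrier Q \<Longrightarrow> \<exists>w. valid_word l w \<and> C = word_eval Q (\<lambda>i. proj (s i)) w"
proof -
  assume "C \<in> carrier Q"
  then obtain a where a: "a \<in> carrier U" "C = proj a" using Q_cases by blast
  obtain w where w: "valid_word l w" "a = word_eval U s w" using U_word a(1) by blast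
  have "\<And>i. i \<in> fst ` set w \<Longrightarrow> s i \<in> carrier U" using w(1) s_car by (auto simp: valid_word_def)
  then show ?thesis using hom_word_eval[OF U_group Q_group proj_hom] a w by auto
qed

lemma Q_self_replicating: "self_replicating Q d phi1"
  using ssg.self_replicating_from_generators[OF Q_ssg proj_s_stab_sections Q_word] .

abbreviation "S0 \<equiv> (\<lambda>i. proj (s i)) ` {0..<l}"

lemma Q_contracting_set: "contracting_set Q d phi1 S0"
  unfolding contracting_set_iff
proof (intro conjI ballI)
  show "finite S0" by simp
  show "S0 \<subseteq> carrier Q" using proj_car s_car by auto
next
  fix C assume "C \<in> carrier Q"
  then obtain a where a: "a \<in> carrier U" "C = proj a" using Q_cases by blast
  obtain k where k: "\<forall>v\<in>words d. k \<le> length v \<longrightarrow> sect phu a v \<in> S"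
    using U_sections_eventually_in[OF a(1)] by (auto simp: sections_eventually_in_def)
  then show "sections_eventually_in d phi1 S0 C"
    unfolding sections_eventually_in_def using a sect_proj by (intro exI[of _ k]) force
qed

text \<open>Minimality: every H s_i is the section, along a word v as long as all thresholds of a
  given contracting set M, of some H s_j; namely v and j come from writing n_i as a section of
  some n_j in G (N_ancestor).\<close>

lemma Q_nucleus: "is_nucleus Q d phi1 S0"
  unfolding is_nucleus_def
proof (intro conjI allI impI Q_contracting_set subsetI)
  fix M C assume M: "contracting_set Q d phi1 M" and C: "C \<in> S0"
  then obtain i where i: "i < l" "C = proj (s i)" by auto
  obtain K where K: "\<forall>j\<in>{0..<l}. \<forall>v\<in>words d. K \<le> length v \<longrightarrow> sect phi1 (proj (s j)) v \<in> M"
    using sections_eventually_in_uniform[of "{0..<l}" d phi1 M "\<lambda>j. proj (s j)"] M proj_car s_car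
    by (auto simp: contracting_set_iff)
  obtain m' v where mv: "m' \<in> N" "v \<in> words d" "length v = K" "sect \<Phi> m' v = n i"
    using N_ancestor[OF n_N[OF i(1)]] by blast
  obtain j where j: "j < l" "n j = m'" using N_index mv(1) by blast
  obtain m where m: "m < l" "sect phu (s j) v = s m" using sect_s[OF j(1) mv(2)] by blast
  have "n m = n i" using sect_s_index[OF j(1) mv(2) m(2) m(1)] mv j by simp
  then have "m = i" using n_inj m i by blast
  then have "sect phi1 (proj (s j)) v = C" using sect_proj[OF s_car[OF j(1)] mv(2)] m i by simp
  then show "C \<in> M" using K j mv by auto
qed

end

theorem mainTheorem3:
  fixes G :: "('a,'b) monoid_scheme"
    and \<Phi> :: "'a \<Rightarrow> (nat \<Rightarrow> 'a) \<times> (nat \<Rightarrow> nat)"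
    and d l :: nat
    and N :: "'a set"
    and n :: "nat \<Rightarrow> 'a"
    and h :: "nat \<Rightarrow> nat \<Rightarrow> gword set"
  assumes d2: "d \<ge> 2"
    and ss: "self_similar G d \<Phi>"
    and fg: "finitely_generated G"
    and contr: "contracting G d \<Phi>"
    and srep: "self_replicating G d \<Phi>"
    and nuc: "is_nucleus G d \<Phi> N"
    and enum: "bij_betw n {0..<l} N"
    and h_car: "\<And>x i. x < d \<Longrightarrow> i < l \<Longrightarrow> h x i \<in> carrier (G0un G n l)"
    and h_fix: "\<And>x i. x < d \<Longrightarrow> i < l \<Longrightarrow> snd (\<Phi> (pi_un G n (h x i))) x = x"
    and h_sec: "\<And>x i. x < d \<Longrightarrow> i < l \<Longrightarrow> fst (\<Phi> (pi_un G n (h x i))) x = n i"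
  shows "(\<forall>a\<in>carrier (G0un G n l).
            phi_1 G d \<Phi> n l h (H_std G d \<Phi> n l h #>\<^bsub>G0un G n l\<^esub> a)
              = quot_wr G d \<Phi> n l h (phi_un G d \<Phi> n l a))
       \<and> self_similar (G0_std G d \<Phi> n l h) d (phi_1 G d \<Phi> n l h)
       \<and> contracting (G0_std G d \<Phi> n l h) d (phi_1 G d \<Phi> n l h)
       \<and> self_replicating (G0_std G d \<Phi> n l h) d (phi_1 G d \<Phi> n l h)
       \<and> is_nucleus (G0_std G d \<Phi> n l h) d (phi_1 G d \<Phi> n l h)
           ((\<lambda>i. H_std G d \<Phi> n l h #>\<^bsub>G0un G n l\<^esub> s_un G n l i) ` {0..<l})
       \<and> (\<forall>C\<in>carrier (G0_std G d \<Phi> n l h).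
            wr_map d (pi_std G n) (phi_1 G d \<Phi> n l h C) = \<Phi> (pi_std G n C))"
proof -
  interpret standard_cover G d \<Phi> N n l h
    using d2 ss nuc enum h_car h_fix h_sec
    by (intro standard_cover.intro universal_cover.intro ssg_nucleus.intro ssg.intro
        standard_cover_axioms.intro universal_cover_axioms.intro ssg_nucleus_axioms.intro)
       (auto simp: self_similar_def)
  have "self_similar Q d phi1" using Q_group phi1_hom by (simp add: self_similar_def)
  moreover have "contracting Q d phi1" using Q_contracting_set by (auto simp: contracting_def)
  ultimately show ?thesis
    using phi1_quot_wr Q_self_replicating Q_nucleus phi1_lifts_Phi by blast
qed

end
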